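(* Let $P$ be a polyhedron in $\mathbb{R}^3$ and let $v$ be a strictly convex vertex of $P$. Then truncating $P$ slightly at $v$ (cutting off $v$ by a plane at sufficiently small distance $t>0$ from $v$) and then rescaling the resulting polyhedron to have the same volume as $P$ yields a polyhedron of strictly smaller surface area than $P$. *)

theory Defs
  imports "HOL-Analysis.Analysis"
begin

type_synonym pt3 = "real^3"

definition tri_area :: "pt3 \<Rightarrow> pt3 \<Rightarrow> pt3 \<Rightarrow> real" where
  "tri_area a b c = norm (cross3 (b - a) (c - a)) / 2"

definition triangulates :: "(pt3 \<times> pt3 \<times> pt3) set \<Rightarrow> pt3 set \<Rightarrow> bool" where
  "triangulates T S \<longleftrightarrow> finite T
     \<and> (\<forall>(a,b,c)\<in>T. \<not> collinear {a,b,c})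
     \<and> S = (\<Union>(a,b,c)\<in>T. convex hull {a,b,c})
     \<and> (\<forall>t1\<in>T. \<forall>t2\<in>T. t1 \<noteq> t2 \<longrightarrow>
          rel_interior (convex hull {fst t1, fst (snd t1), snd (snd t1)}) \<inter>
          rel_interior (convex hull {fst t2, fst (snd t2), snd (snd t2)}) = {})"

text \<open>A polyhedron: a compact solid (closure of its interior) whose boundary is
  a finite union of polygons (equivalently, triangles).\<close>
definition polyhedron :: "pt3 set \<Rightarrow> bool" where
  "polyhedron P \<longleftrightarrow> compact P \<and> closure (interior P) = P \<and> (\<exists>T. triangulates T (frontier P))"

definition surface_area :: "pt3 set \<Rightarrow> real" where
  "surface_area P = (THE A. \<exists>T. triangulates T (frontier P) \<and> A = (\<Sum>(a,b,c)\<in>T. tri_area a b c))"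

definition volume :: "pt3 set \<Rightarrow> real" where
  "volume P = measure lebesgue P"

definition strictly_convex_vertex :: "pt3 set \<Rightarrow> pt3 \<Rightarrow> bool" where
  "strictly_convex_vertex P v \<longleftrightarrow> v \<in> P \<and>
     (\<exists>r>0. convex (P \<inter> cball v r) \<and>
        (\<exists>u. \<forall>x\<in>P \<inter> cball v r. x \<noteq> v \<longrightarrow> inner (x - v) u > 0))"

text \<open>Truncation of P at v by the plane {x. (x - v) . u = t} (u a unit vector),
  removing only the cap near v (inside ball v r).\<close>
definition truncate :: "pt3 set \<Rightarrow> pt3 \<Rightarrow> pt3 \<Rightarrow> real \<Rightarrow> real \<Rightarrow> pt3 set" where
  "truncate P v u r t = P - {x. x \<in> ball v r \<and> inner (x - v) u < t}"

definition rescale_to_volume :: "real \<Rightarrow> pt3 set \<Rightarrow> pt3 set" where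
  "rescale_to_volume V Q = (\<lambda>x. (V / volume Q) powr (1/3) *\<^sub>R x) ` Q"

end

theory Submission
  imports Defs
begin

text \<open>
  Near a strictly convex vertex v the polyhedron lies in a cone around the direction u: points x
  of P close to v satisfy |x - v| \<le> C ((x - v) \<bullet> u). Hence the cap cut off at height t has
  diameter O(t) and volume O(t^3).

  Each face through v, with further vertices B and C, loses its tip, the triangle
  v, v + s (B - v), v + s' (C - v) with s = t / ((B - v) \<bullet> u) and s' = t / ((C - v) \<bullet> u); its
  area is s s' |N| / 2 for the face normal N = (B - v) \<times> (C - v). The new face in the cutting plane
  is covered by the orthogonal projections of these tips, of area s s' |N \<bullet> u| / 2 each, and
  |N \<bullet> u| < |N| because the face rises strictly above v. So the surface area drops by at least
  k t^2 for some k > 0, while rescaling back to the original volume multiplies it only by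
  1 + O(t^3).
\<close>

unbundle cross3_syntax

text \<open>Areas of planar sets are measured by pulling them back to real^2 along an isometric
  parametrisation of their plane.\<close>
definition plane_param :: "pt3 \<Rightarrow> pt3 \<Rightarrow> pt3 \<Rightarrow> real^2 \<Rightarrow> pt3" where
  "plane_param p e1 e2 z = p + (z$1) *\<^sub>R e1 + (z$2) *\<^sub>R e2"

definition orthonormal2 :: "pt3 \<Rightarrow> pt3 \<Rightarrow> bool" where
  "orthonormal2 e1 e2 \<longleftrightarrow> e1 \<bullet> e1 = 1 \<and> e2 \<bullet> e2 = 1 \<and> e1 \<bullet> e2 = 0"

lemma orthonormal2_cross_unit:
  assumes "orthonormal2 e1 e2" shows "(e1 \<times> e2) \<bullet> (e1 \<times> e2) = 1"
proof -
  have "(norm (e1 \<times> e2))\<^sup>2 = 1"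
    using assms norm_cross[of e1 e2] by (simp add: orthonormal2_def power2_norm_eq_inner)
  then show ?thesis by (simp add: power2_norm_eq_inner)
qed

lemma orthonormal2_expansion:
  assumes "orthonormal2 e1 e2"
  shows "y = (y \<bullet> e1) *\<^sub>R e1 + (y \<bullet> e2) *\<^sub>R e2 + (y \<bullet> (e1 \<times> e2)) *\<^sub>R (e1 \<times> e2)"
proof -
  define n where "n = e1 \<times> e2"
  define z where "z = y - (y \<bullet> e1) *\<^sub>R e1 - (y \<bullet> e2) *\<^sub>R e2"
  have o: "e1 \<bullet> e1 = 1" "e2 \<bullet> e2 = 1" "e1 \<bullet> e2 = 0" using assms by (auto simp: orthonormal2_def)
  have nn: "n \<bullet> n = 1" using orthonormal2_cross_unit[OF assms] by (simp add: n_def)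
  have o': "e2 \<bullet> e1 = 0" using o by (simp add: inner_commute)
  have z1: "z \<bullet> e1 = 0" and z2: "z \<bullet> e2 = 0"
    using o o' by (auto simp: z_def inner_diff_left)
  have "z \<times> n = (z \<bullet> e2) *\<^sub>R e1 - (z \<bullet> e1) *\<^sub>R e2"
    unfolding n_def by (simp add: Lagrange)
  then have zn: "z \<times> n = 0" using z1 z2 by simp
  have "n \<times> (z \<times> n) = (n \<bullet> n) *\<^sub>R z - (n \<bullet> z) *\<^sub>R n"
    by (simp add: Lagrange)
  with zn nn have "z = (n \<bullet> z) *\<^sub>R n" by simp
  moreover have "n \<bullet> z = y \<bullet> n"
    by (simp add: z_def n_def inner_diff_right dot_cross_self inner_commute)
  ultimately show ?thesis unfolding z_def n_def[symmetric]
    by (metis (no_types, lifting) add.commute diff_diff_eq diff_eq_eq)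
qed

lemma range_plane_param:
  assumes "orthonormal2 e1 e2"
  shows "range (plane_param p e1 e2) = {x. (e1 \<times> e2) \<bullet> (x - p) = 0}"
proof (intro set_eqI iffI)
  fix x assume "x \<in> range (plane_param p e1 e2)"
  then obtain z where "x = plane_param p e1 e2 z" by auto
  then show "x \<in> {x. (e1 \<times> e2) \<bullet> (x - p) = 0}"
    by (simp add: plane_param_def inner_add_right dot_cross_self)
next
  fix x assume x: "x \<in> {x. (e1 \<times> e2) \<bullet> (x - p) = 0}"
  define z :: "real^2" where "z = vector [(x - p) \<bullet> e1, (x - p) \<bullet> e2]"
  have "plane_param p e1 e2 z = p + ((x - p) \<bullet> e1) *\<^sub>R e1 + ((x - p) \<bullet> e2) *\<^sub>R e2"
    by (simp add: plane_param_def z_def)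
  also have "\<dots> = p + (x - p)"
  proof -
    have h: "x - p = ((x - p) \<bullet> e1) *\<^sub>R e1 + ((x - p) \<bullet> e2) *\<^sub>R e2"
      using orthonormal2_expansion[OF assms, of "x - p"] x by (simp add: inner_commute)
    show ?thesis by (subst (2) h) (simp add: add.assoc)
  qed
  finally show "x \<in> range (plane_param p e1 e2)" by (metis add.commute diff_add_cancel rangeI)
qed

lemma orthonormal2_with_cross:
  fixes n :: pt3
  assumes "n \<bullet> n = 1"
  shows "\<exists>e1 e2. orthonormal2 e1 e2 \<and> e1 \<times> e2 = n"
proof -
  have "\<exists>a::pt3. n \<times> a \<noteq> 0"
  proof (rule ccontr)
    assume "\<not> ?thesis"
    then have "n \<times> axis 1 1 = 0" "n \<times> axis 2 1 = 0" "n \<times> axis 3 1 = 0" by auto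
    then have "n = 0" by (simp add: cross3_simps axis_def forall_3)
    with assms show False by simp
  qed
  then obtain a where a: "n \<times> a \<noteq> 0" by blast
  define e1 where "e1 = (1 / norm (n \<times> a)) *\<^sub>R (n \<times> a)"
  define e2 where "e2 = n \<times> e1"
  have n1: "e1 \<bullet> e1 = 1" using a
    by (simp add: e1_def power2_norm_eq_inner[symmetric] power2_eq_square)
  have ne1: "n \<bullet> e1 = 0" by (simp add: e1_def dot_cross_self)
  have n2: "e2 \<bullet> e2 = 1"
  proof -
    have "(norm e2)\<^sup>2 = 1" using norm_cross[of n e1] n1 ne1 assms
      by (simp add: e2_def power2_norm_eq_inner)
    then show ?thesis by (simp add: power2_norm_eq_inner)
  qed
  have n3: "e1 \<bullet> e2 = 0" by (simp add: e2_def dot_cross_self)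
  have "e1 \<times> e2 = (e1 \<bullet> e1) *\<^sub>R n - (e1 \<bullet> n) *\<^sub>R e1"
    by (simp add: e2_def Lagrange)
  then have "e1 \<times> e2 = n" using n1 ne1 by (simp add: inner_commute)
  then show ?thesis using n1 n2 n3 by (auto simp: orthonormal2_def)
qed

definition plane_lin :: "pt3 \<Rightarrow> pt3 \<Rightarrow> real^2 \<Rightarrow> pt3" where
  "plane_lin e1 e2 z = (z$1) *\<^sub>R e1 + (z$2) *\<^sub>R e2"

lemma plane_param_eq_lin: "plane_param p e1 e2 = (\<lambda>z. p + plane_lin e1 e2 z)"
  by (auto simp: plane_param_def plane_lin_def add.assoc)

lemma linear_plane_lin: "linear (plane_lin e1 e2)"
  by (rule linearI) (auto simp: plane_lin_def algebra_simps)

lemma bounded_linear_plane_lin: "bounded_linear (plane_lin e1 e2)"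
  using linear_plane_lin linear_conv_bounded_linear by blast

lemma norm_vec2_power2: "(norm (z::real^2))\<^sup>2 = (z$1)\<^sup>2 + (z$2)\<^sup>2"
proof -
  have "(norm z)\<^sup>2 = z \<bullet> z" by (rule power2_norm_eq_inner)
  also have "\<dots> = (z$1)\<^sup>2 + (z$2)\<^sup>2" by (simp add: inner_vec_def sum_2 power2_eq_square)
  finally show ?thesis .
qed

lemma norm_plane_lin:
  assumes "orthonormal2 e1 e2" shows "norm (plane_lin e1 e2 z) = norm z"
proof -
  have o: "e1 \<bullet> e1 = 1" "e2 \<bullet> e2 = 1" "e1 \<bullet> e2 = 0" "e2 \<bullet> e1 = 0"
    using assms by (auto simp: orthonormal2_def inner_commute)
  have "(norm (plane_lin e1 e2 z))\<^sup>2 = plane_lin e1 e2 z \<bullet> plane_lin e1 e2 z" by (rule power2_norm_eq_inner)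
  also have "\<dots> = (z$1)\<^sup>2 + (z$2)\<^sup>2"
    using o by (simp add: plane_lin_def inner_add_left inner_add_right power2_eq_square algebra_simps)
  also have "\<dots> = (norm z)\<^sup>2" by (simp add: norm_vec2_power2)
  finally have "(norm (plane_lin e1 e2 z))\<^sup>2 = (norm z)\<^sup>2" .
  then show ?thesis by (simp add: power2_eq_iff_nonneg)
qed

lemma inj_plane_lin: assumes "orthonormal2 e1 e2" shows "inj (plane_lin e1 e2)"
proof (rule injI)
  fix x y assume "plane_lin e1 e2 x = plane_lin e1 e2 y"
  then have "plane_lin e1 e2 (x - y) = 0" using linear_plane_lin[of e1 e2]
    by (simp add: linear_diff)
  moreover have "norm (x - y) = norm (plane_lin e1 e2 (x - y))" using norm_plane_lin[OF assms] by simp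
  ultimately have "norm (x - y) = 0" by simp
  then show "x = y" by simp
qed

lemma inj_plane_param: assumes "orthonormal2 e1 e2" shows "inj (plane_param p e1 e2)"
  using inj_plane_lin[OF assms] unfolding plane_param_eq_lin inj_def by auto

lemma plane_param_image_convex_hull:
  "plane_param p e1 e2 ` (convex hull S) = convex hull (plane_param p e1 e2 ` S)"
proof -
  have "plane_param p e1 e2 ` X = (+) p ` (plane_lin e1 e2 ` X)" for X
    by (auto simp: plane_param_eq_lin image_image)
  then show ?thesis
    by (simp add: convex_hull_linear_image[OF linear_plane_lin] convex_hull_translation)
qed

lemma plane_param_image_rel_interior:
  assumes "orthonormal2 e1 e2"
  shows "plane_param p e1 e2 ` (rel_interior S) = rel_interior (plane_param p e1 e2 ` S)"
proof -
  have "plane_param p e1 e2 ` X = (\<lambda>x. p + x) ` (plane_lin e1 e2 ` X)" for X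
    by (auto simp: plane_param_eq_lin image_image)
  then show ?thesis
    by (simp add: rel_interior_translation rel_interior_injective_linear_image[OF bounded_linear_plane_lin inj_plane_lin[OF assms]])
qed

lemma plane_param_vimage_convex_hull:
  assumes "orthonormal2 e1 e2" "S \<subseteq> range (plane_param p e1 e2)"
  shows "plane_param p e1 e2 -` (convex hull S) = convex hull (plane_param p e1 e2 -` S)"
proof -
  have "S = plane_param p e1 e2 ` (plane_param p e1 e2 -` S)" using assms(2) by auto
  then have "plane_param p e1 e2 -` (convex hull S) = plane_param p e1 e2 -` (plane_param p e1 e2 ` (convex hull (plane_param p e1 e2 -` S)))"
    by (metis plane_param_image_convex_hull)
  also have "\<dots> = convex hull (plane_param p e1 e2 -` S)"
    by (rule inj_vimage_image_eq[OF inj_plane_param[OF assms(1)]])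
  finally show ?thesis .
qed

lemma cross_plane_lin:
  "plane_lin e1 e2 x \<times> plane_lin e1 e2 y = (x$1 * y$2 - x$2 * y$1) *\<^sub>R (e1 \<times> e2)"
proof -
  have sk: "e2 \<times> e1 = - (e1 \<times> e2)" by (rule cross_skew)
  show ?thesis
    by (simp add: plane_lin_def cross_add_left cross_add_right cross_mult_left cross_mult_right sk
        algebra_simps)
qed

lemma measure_plane_param_vimage_triangle:
  assumes o: "orthonormal2 e1 e2"
    and abc: "a \<in> range (plane_param p e1 e2)" "b \<in> range (plane_param p e1 e2)" "c \<in> range (plane_param p e1 e2)"
  shows "measure lebesgue (plane_param p e1 e2 -` (convex hull {a,b,c})) = tri_area a b c"
proof -
  obtain A B C where ABC: "a = plane_param p e1 e2 A" "b = plane_param p e1 e2 B" "c = plane_param p e1 e2 C"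
    using abc by auto
  have "plane_param p e1 e2 -` {a,b,c} = {A,B,C}"
    using inj_plane_param[OF o, of p] ABC by (auto simp: inj_eq)
  then have pre: "plane_param p e1 e2 -` (convex hull {a,b,c}) = convex hull {A,B,C}"
    using plane_param_vimage_convex_hull[OF o, of "{a,b,c}" p] abc by simp
  have cpt: "compact (convex hull {A,B,C})" by (simp add: finite_imp_compact_convex_hull)
  have "measure lebesgue (convex hull {A,B,C}) = measure lborel (convex hull {A,B,C})"
    using cpt by (intro measure_completion) (auto dest: compact_imp_closed)
  also have "\<dots> = \<bar>(C $ 1 - A $ 1) * (B $ 2 - A $ 2) - (B $ 1 - A $ 1) * (C $ 2 - A $ 2)\<bar> / 2"
    by (rule content_triangle)
  also have "\<dots> = tri_area a b c"
  proof -
    have "b - a = plane_lin e1 e2 (B - A)" "c - a = plane_lin e1 e2 (C - A)"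
      using linear_plane_lin[of e1 e2] by (auto simp: ABC plane_param_eq_lin linear_diff)
    then have "(b - a) \<times> (c - a) = ((B-A)$1 * (C-A)$2 - (B-A)$2 * (C-A)$1) *\<^sub>R (e1 \<times> e2)"
      by (simp add: cross_plane_lin)
    moreover have "norm (e1 \<times> e2) = 1"
      using orthonormal2_cross_unit[OF o] by (simp add: norm_eq_1)
    ultimately have "norm ((b - a) \<times> (c - a)) = \<bar>(B-A)$1 * (C-A)$2 - (B-A)$2 * (C-A)$1\<bar>"
      by simp
    then show ?thesis unfolding tri_area_def by (simp add: abs_minus_commute algebra_simps)
  qed
  finally show ?thesis using pre by simp
qed

definition tri_hull :: "pt3 \<times> pt3 \<times> pt3 \<Rightarrow> pt3 set" where
  "tri_hull = (\<lambda>(a,b,c). convex hull {a,b,c})"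
definition triangle_area :: "pt3 \<times> pt3 \<times> pt3 \<Rightarrow> real" where
  "triangle_area = (\<lambda>(a,b,c). tri_area a b c)"
definition tri_verts :: "pt3 \<times> pt3 \<times> pt3 \<Rightarrow> pt3 set" where
  "tri_verts = (\<lambda>(a,b,c). {a,b,c})"
definition tri_nondeg :: "pt3 \<times> pt3 \<times> pt3 \<Rightarrow> bool" where
  "tri_nondeg = (\<lambda>(a,b,c). \<not> collinear {a,b,c})"
definition tri_normal :: "pt3 \<times> pt3 \<times> pt3 \<Rightarrow> pt3" where
  "tri_normal = (\<lambda>(a,b,c). (b - a) \<times> (c - a))"
definition tri_plane :: "pt3 \<times> pt3 \<times> pt3 \<Rightarrow> pt3 set" where
  "tri_plane = (\<lambda>(a,b,c). {x. ((b - a) \<times> (c - a)) \<bullet> (x - a) = 0})"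

definition proper_triangles :: "(pt3 \<times> pt3 \<times> pt3) set \<Rightarrow> bool" where
  "proper_triangles T \<longleftrightarrow> finite T \<and> (\<forall>t\<in>T. tri_nondeg t) \<and>
     (\<forall>t1\<in>T. \<forall>t2\<in>T. t1 \<noteq> t2 \<longrightarrow> rel_interior (tri_hull t1) \<inter> rel_interior (tri_hull t2) = {})"

lemma triangulates_iff:
  "triangulates T S \<longleftrightarrow> proper_triangles T \<and> S = \<Union>(tri_hull ` T)"
proof -
  have h: "tri_hull t = convex hull {fst t, fst (snd t), snd (snd t)}" for t
    by (cases t) (auto simp: tri_hull_def)
  have "(\<Union>(a,b,c)\<in>T. convex hull {a,b,c}) = \<Union>(tri_hull ` T)"
    by (auto simp: tri_hull_def)
  moreover have "(\<forall>(a,b,c)\<in>T. \<not> collinear {a,b,c}) \<longleftrightarrow> (\<forall>t\<in>T. tri_nondeg t)"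
    by (auto simp: tri_nondeg_def)
  ultimately show ?thesis unfolding triangulates_def proper_triangles_def h by auto
qed

lemma sum_case_prod_tri_area: "(\<Sum>(a,b,c)\<in>T. tri_area a b c) = sum triangle_area T"
  by (simp add: triangle_area_def)

lemma tri_normal_nonzero: "tri_nondeg t \<Longrightarrow> tri_normal t \<noteq> 0"
proof (cases t)
  case (fields a b c)
  assume "tri_nondeg t"
  then have "\<not> collinear {b, a, c}" by (simp add: fields tri_nondeg_def insert_commute)
  then have "\<not> collinear {0, b - a, c - a}" by (simp add: collinear_3)
  then show ?thesis by (simp add: fields tri_normal_def cross_eq_0)
qed

lemma triangle_area_pos: "tri_nondeg t \<Longrightarrow> triangle_area t > 0"
  using tri_normal_nonzero[of t] by (cases t) (auto simp: triangle_area_def tri_area_def tri_normal_def)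

lemma triangle_area_nonneg: "triangle_area t \<ge> 0"
  by (cases t) (auto simp: triangle_area_def tri_area_def)

lemma tri_hull_subset_plane: "tri_hull t \<subseteq> tri_plane t"
proof (cases t)
  case (fields a b c)
  have "convex {x. ((b - a) \<times> (c - a)) \<bullet> (x - a) = 0}"
  proof -
    have "{x. ((b - a) \<times> (c - a)) \<bullet> (x - a) = 0} = {x. ((b - a) \<times> (c - a)) \<bullet> x = ((b - a) \<times> (c - a)) \<bullet> a}"
      by (auto simp: inner_diff_right)
    then show ?thesis by (simp add: convex_hyperplane)
  qed
  moreover have "{a,b,c} \<subseteq> {x. ((b - a) \<times> (c - a)) \<bullet> (x - a) = 0}"
    by (auto simp: dot_cross_self)
  ultimately show ?thesis by (simp add: fields tri_hull_def tri_plane_def hull_minimal)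
qed

lemma tri_verts_subset_plane: "tri_verts t \<subseteq> tri_plane t"
  using tri_hull_subset_plane[of t] hull_subset[of "tri_verts t" convex]
  by (cases t) (auto simp: tri_hull_def tri_verts_def)

lemma tri_hull_eq: "tri_hull t = convex hull (tri_verts t)"
  by (cases t) (auto simp: tri_hull_def tri_verts_def)

lemma vimage_tri_hull_subset_line:
  "plane_param p e1 e2 -` tri_hull t \<subseteq>
     {z. vector [tri_normal t \<bullet> e1, tri_normal t \<bullet> e2] \<bullet> z = tri_normal t \<bullet> (fst t - p)}"
proof
  obtain a b c where t: "t = (a,b,c)" by (cases t)
  define w where "w = tri_normal t"
  fix z assume "z \<in> plane_param p e1 e2 -` tri_hull t"
  then have "plane_param p e1 e2 z \<in> tri_plane t" using tri_hull_subset_plane[of t] by auto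
  then have "w \<bullet> (plane_param p e1 e2 z - a) = 0" by (simp add: t tri_plane_def w_def tri_normal_def)
  moreover have "w \<bullet> (plane_param p e1 e2 z - a) = w \<bullet> (p - a) + z$1 * (w \<bullet> e1) + z$2 * (w \<bullet> e2)"
    by (simp add: plane_param_def inner_add_right inner_diff_right)
  moreover have "vector [w \<bullet> e1, w \<bullet> e2] \<bullet> z = z$1 * (w \<bullet> e1) + z$2 * (w \<bullet> e2)"
    by (simp add: inner_vec_def sum_2 mult.commute)
  ultimately have "vector [w \<bullet> e1, w \<bullet> e2] \<bullet> z = w \<bullet> (a - p)"
    by (simp add: inner_diff_right)
  then show "z \<in> {z. vector [tri_normal t \<bullet> e1, tri_normal t \<bullet> e2] \<bullet> z = tri_normal t \<bullet> (fst t - p)}"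
    by (simp add: t w_def)
qed

lemma tri_verts_subset_range_plane_param:
  assumes o: "orthonormal2 e1 e2" and nc: "tri_nondeg t"
    and we: "tri_normal t \<bullet> e1 = 0" "tri_normal t \<bullet> e2 = 0" "tri_normal t \<bullet> (fst t - p) = 0"
  shows "tri_verts t \<subseteq> range (plane_param p e1 e2)"
proof
  obtain a b c where t: "t = (a,b,c)" by (cases t)
  define w where "w = tri_normal t"
  define n where "n = e1 \<times> e2"
  have "w = (w \<bullet> e1) *\<^sub>R e1 + (w \<bullet> e2) *\<^sub>R e2 + (w \<bullet> n) *\<^sub>R n"
    unfolding n_def by (rule orthonormal2_expansion[OF o])
  then have wn: "w = (w \<bullet> n) *\<^sub>R n" using we by (simp add: w_def)
  have wn0: "w \<bullet> n \<noteq> 0" using wn tri_normal_nonzero[OF nc] by (metis scale_zero_left w_def)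
  fix x assume "x \<in> tri_verts t"
  then have "w \<bullet> (x - a) = 0"
    using tri_verts_subset_plane[of t] by (auto simp: t tri_plane_def w_def tri_normal_def)
  moreover have "w \<bullet> (x - p) = w \<bullet> (x - a) + w \<bullet> (a - p)" by (simp add: inner_diff_right)
  ultimately have "w \<bullet> (x - p) = 0" using we(3) by (simp add: t w_def)
  then have "(w \<bullet> n) * (n \<bullet> (x - p)) = 0" by (subst (asm) wn) simp
  then have "n \<bullet> (x - p) = 0" using wn0 by simp
  then show "x \<in> range (plane_param p e1 e2)" using range_plane_param[OF o, of p] by (simp add: n_def)
qed

lemma negligible_vimage_transversal_triangle:
  assumes o: "orthonormal2 e1 e2" and nc: "tri_nondeg t"
    and nsub: "\<not> tri_verts t \<subseteq> range (plane_param p e1 e2)"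
  shows "negligible (plane_param p e1 e2 -` tri_hull t)"
proof -
  let ?k = "vector [tri_normal t \<bullet> e1, tri_normal t \<bullet> e2] :: real^2"
  have "?k \<noteq> 0 \<or> tri_normal t \<bullet> (fst t - p) \<noteq> 0"
    using tri_verts_subset_range_plane_param[OF o nc] nsub by (auto simp: vec_eq_iff forall_2)
  then show ?thesis
    using negligible_subset[OF negligible_hyperplane vimage_tri_hull_subset_line] by blast
qed

lemma plane_param_vimage_tri_hull:
  assumes o: "orthonormal2 e1 e2" and sub: "tri_verts t \<subseteq> range (plane_param p e1 e2)"
  shows "plane_param p e1 e2 -` tri_hull t = convex hull (plane_param p e1 e2 -` tri_verts t)"
    and "compact (plane_param p e1 e2 -` tri_hull t)"
proof -
  show eq: "plane_param p e1 e2 -` tri_hull t = convex hull (plane_param p e1 e2 -` tri_verts t)"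
    using plane_param_vimage_convex_hull[OF o sub] by (simp add: tri_hull_eq)
  have "finite (plane_param p e1 e2 -` tri_verts t)"
    by (rule finite_vimageI) (auto simp: tri_verts_def inj_plane_param[OF o] split: prod.splits)
  then show "compact (plane_param p e1 e2 -` tri_hull t)"
    by (simp add: eq finite_imp_compact_convex_hull)
qed

lemma convex_range_plane_param:
  assumes "orthonormal2 e1 e2" shows "convex (range (plane_param p e1 e2))"
  using range_plane_param[OF assms, of p] convex_hyperplane[of "e1 \<times> e2" "(e1 \<times> e2) \<bullet> p"]
  by (simp add: inner_diff_right)

lemma image_vimage_tri_hull:
  assumes o: "orthonormal2 e1 e2" and sub: "tri_verts t \<subseteq> range (plane_param p e1 e2)"
  shows "plane_param p e1 e2 ` (plane_param p e1 e2 -` tri_hull t) = tri_hull t"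
proof -
  have "tri_hull t \<subseteq> range (plane_param p e1 e2)"
    using convex_range_plane_param[OF o] sub by (simp add: tri_hull_eq hull_minimal)
  then show ?thesis by auto
qed

lemma measure_vimage_tri_hull:
  assumes o: "orthonormal2 e1 e2" and sub: "tri_verts t \<subseteq> range (plane_param p e1 e2)"
  shows "measure lebesgue (plane_param p e1 e2 -` tri_hull t) = triangle_area t"
proof -
  obtain a b c where t: "t = (a,b,c)" by (cases t)
  show ?thesis
    using measure_plane_param_vimage_triangle[OF o, of a p b c] sub
    by (simp add: t tri_hull_def triangle_area_def tri_verts_def)
qed

text \<open>Parametrised triangles meet only along their frontiers, since the interior of a
  parametrised triangle is mapped into the relative interior of the triangle.\<close>
lemma negligible_Int_vimage_tri_hull:
  assumes o: "orthonormal2 e1 e2"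
    and sub: "tri_verts t1 \<subseteq> range (plane_param p e1 e2)" "tri_verts t2 \<subseteq> range (plane_param p e1 e2)"
    and disj: "rel_interior (tri_hull t1) \<inter> rel_interior (tri_hull t2) = {}"
  shows "negligible (plane_param p e1 e2 -` tri_hull t1 \<inter> plane_param p e1 e2 -` tri_hull t2)"
proof -
  let ?f = "\<lambda>t. plane_param p e1 e2 -` tri_hull t"
  have cv: "convex (?f t1)" "convex (?f t2)"
    using plane_param_vimage_tri_hull(1)[OF o sub(1)] plane_param_vimage_tri_hull(1)[OF o sub(2)] by auto
  have cl: "closed (?f t1)" "closed (?f t2)"
    using plane_param_vimage_tri_hull(2)[OF o sub(1)] plane_param_vimage_tri_hull(2)[OF o sub(2)]
    by (auto intro: compact_imp_closed)
  have ri: "plane_param p e1 e2 ` interior (?f ti) \<subseteq> rel_interior (tri_hull ti)"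
    if "tri_verts ti \<subseteq> range (plane_param p e1 e2)" for ti
    using plane_param_image_rel_interior[OF o, of p "?f ti"] image_vimage_tri_hull[OF o that]
      interior_subset_rel_interior
    by (metis image_mono)
  have "?f t1 \<inter> ?f t2 \<subseteq> frontier (?f t1) \<union> frontier (?f t2)"
  proof
    fix x assume x: "x \<in> ?f t1 \<inter> ?f t2"
    have "x \<notin> interior (?f t1) \<or> x \<notin> interior (?f t2)"
      using ri[OF sub(1)] ri[OF sub(2)] disj by blast
    then show "x \<in> frontier (?f t1) \<union> frontier (?f t2)"
      using x cl by (auto simp: frontier_def closure_closed)
  qed
  moreover have "negligible (frontier (?f t1) \<union> frontier (?f t2))"
    using negligible_convex_frontier cv by auto
  ultimately show ?thesis by (rule negligible_subset[rotated])
qed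

lemma measure_vimage_Union_coplanar:
  assumes o: "orthonormal2 e1 e2" and ok: "proper_triangles T"
    and sub: "\<And>t. t \<in> T \<Longrightarrow> tri_verts t \<subseteq> range (plane_param p e1 e2)"
  shows "measure lebesgue (\<Union>t\<in>T. plane_param p e1 e2 -` tri_hull t) = sum triangle_area T"
proof -
  have fin: "finite T" using ok by (simp add: proper_triangles_def)
  have "measure lebesgue (\<Union>t\<in>T. plane_param p e1 e2 -` tri_hull t)
      = (\<Sum>t\<in>T. measure lebesgue (plane_param p e1 e2 -` tri_hull t))"
  proof (rule measure_negligible_finite_Union_image[OF fin])
    show "plane_param p e1 e2 -` tri_hull t \<in> lmeasurable" if "t \<in> T" for t
      using plane_param_vimage_tri_hull[OF o sub[OF that]] lmeasurable_compact by blast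
    show "pairwise (\<lambda>x y. negligible (plane_param p e1 e2 -` tri_hull x \<inter> plane_param p e1 e2 -` tri_hull y)) T"
      using ok sub unfolding pairwise_def proper_triangles_def
      by (blast intro: negligible_Int_vimage_tri_hull[OF o])
  qed
  also have "\<dots> = sum triangle_area T"
    by (intro sum.cong refl measure_vimage_tri_hull[OF o sub])
  finally show ?thesis .
qed

lemma sum_triangle_area_le_cover:
  assumes o: "orthonormal2 e1 e2" and ok: "proper_triangles A" and fin: "finite B"
    and sub: "\<And>t. t \<in> A \<union> B \<Longrightarrow> tri_verts t \<subseteq> range (plane_param p e1 e2)"
    and cover: "\<Union>(tri_hull ` A) \<subseteq> \<Union>(tri_hull ` B)"
  shows "sum triangle_area A \<le> sum triangle_area B"
proof -
  let ?f = "\<lambda>t. plane_param p e1 e2 -` tri_hull t"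
  have cpt: "compact (?f t)" if "t \<in> A \<union> B" for t
    using plane_param_vimage_tri_hull(2)[OF o sub[OF that]] .
  have finA: "finite A" using ok by (simp add: proper_triangles_def)
  have "sum triangle_area A = measure lebesgue (\<Union>t\<in>A. ?f t)"
    by (rule measure_vimage_Union_coplanar[OF o ok, symmetric]) (use sub in auto)
  also have "\<dots> \<le> measure lebesgue (\<Union>t\<in>B. ?f t)"
  proof (rule measure_mono_fmeasurable)
    show "(\<Union>t\<in>A. ?f t) \<subseteq> (\<Union>t\<in>B. ?f t)" using cover by blast
    show "(\<Union>t\<in>A. ?f t) \<in> sets lebesgue"
      using finA cpt by (intro fmeasurableD lmeasurable_compact compact_UN) auto
    show "(\<Union>t\<in>B. ?f t) \<in> lmeasurable"
      using fin cpt by (intro lmeasurable_compact compact_UN) auto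
  qed
  also have "\<dots> \<le> (\<Sum>t\<in>B. measure lebesgue (?f t))"
    using fin cpt by (intro measure_UNION_le) (auto simp: fmeasurableD lmeasurable_compact)
  also have "\<dots> = sum triangle_area B"
    using sub by (intro sum.cong refl measure_vimage_tri_hull[OF o]) auto
  finally show ?thesis .
qed

lemma measure_vimage_Union_triangles:
  assumes o: "orthonormal2 e1 e2" and ok: "proper_triangles T"
  shows "measure lebesgue (plane_param p e1 e2 -` \<Union>(tri_hull ` T)) =
         sum triangle_area {t\<in>T. tri_verts t \<subseteq> range (plane_param p e1 e2)}"
proof -
  let ?f = "\<lambda>t. plane_param p e1 e2 -` tri_hull t"
  define Ti where "Ti = {t\<in>T. tri_verts t \<subseteq> range (plane_param p e1 e2)}"
  define To where "To = {t\<in>T. \<not> tri_verts t \<subseteq> range (plane_param p e1 e2)}"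
  have fin: "finite T" using ok by (simp add: proper_triangles_def)
  have okTi: "proper_triangles Ti" using ok fin by (auto simp: proper_triangles_def Ti_def)
  have eq: "plane_param p e1 e2 -` \<Union>(tri_hull ` T) = (\<Union>t\<in>Ti. ?f t) \<union> (\<Union>t\<in>To. ?f t)"
    by (auto simp: Ti_def To_def)
  have neg: "negligible (\<Union>t\<in>To. ?f t)"
  proof (rule negligible_Union)
    show "finite (?f ` To)" using fin by (simp add: To_def)
    show "negligible S" if S: "S \<in> ?f ` To" for S
    proof -
      obtain t where "t \<in> To" "S = ?f t" using S by blast
      then show ?thesis using negligible_vimage_transversal_triangle[OF o, of t p] ok by (auto simp: To_def proper_triangles_def)
    qed
  qed
  have mTi: "(\<Union>t\<in>Ti. ?f t) \<in> sets lebesgue"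
  proof -
    have "finite Ti" using fin by (simp add: Ti_def)
    moreover have "compact (?f t)" if "t \<in> Ti" for t
      using plane_param_vimage_tri_hull(2)[OF o] that by (auto simp: Ti_def)
    ultimately have "compact (\<Union>t\<in>Ti. ?f t)" by blast
    then show ?thesis by (simp add: lmeasurable_compact fmeasurableD)
  qed
  have "measure lebesgue (plane_param p e1 e2 -` \<Union>(tri_hull ` T)) = measure lebesgue (\<Union>t\<in>Ti. ?f t)"
    unfolding eq by (rule measure_Un_null_set[OF mTi]) (simp add: neg negligible_iff_null_sets[symmetric])
  also have "\<dots> = sum triangle_area Ti"
    by (rule measure_vimage_Union_coplanar[OF o okTi]) (simp add: Ti_def)
  finally show ?thesis by (simp add: Ti_def)
qed

text \<open>Surface area is defined through an arbitrary triangulation of the boundary. It is well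
  defined because every triangulation sum equals the planar area below: the sum, over all planes,
  of the two-dimensional measure of the part of the set lying in the plane.\<close>
definition is_plane :: "pt3 set \<Rightarrow> bool" where
  "is_plane HH \<longleftrightarrow> (\<exists>p e1 e2. orthonormal2 e1 e2 \<and> HH = range (plane_param p e1 e2))"

definition plane_frame :: "pt3 set \<Rightarrow> pt3 \<times> pt3 \<times> pt3" where
  "plane_frame HH = (SOME f. orthonormal2 (fst (snd f)) (snd (snd f)) \<and> HH = range (plane_param (fst f) (fst (snd f)) (snd (snd f))))"

definition plane_measure :: "pt3 set \<Rightarrow> pt3 set \<Rightarrow> real" where
  "plane_measure HH X = measure lebesgue (plane_param (fst (plane_frame HH)) (fst (snd (plane_frame HH))) (snd (snd (plane_frame HH))) -` X)"

definition planar_area :: "pt3 set \<Rightarrow> real" where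
  "planar_area S = (\<Sum>HH\<in>{HH. is_plane HH \<and> plane_measure HH S \<noteq> 0}. plane_measure HH S)"

lemma plane_frame:
  assumes "is_plane HH"
  shows "orthonormal2 (fst (snd (plane_frame HH))) (snd (snd (plane_frame HH)))"
    "HH = range (plane_param (fst (plane_frame HH)) (fst (snd (plane_frame HH))) (snd (snd (plane_frame HH))))"
proof -
  obtain p e1 e2 where "orthonormal2 e1 e2" "HH = range (plane_param p e1 e2)" using assms by (auto simp: is_plane_def)
  then have ex: "\<exists>f. orthonormal2 (fst (snd f)) (snd (snd f)) \<and> HH = range (plane_param (fst f) (fst (snd f)) (snd (snd f)))"
    by (intro exI[of _ "(p,e1,e2)"]) simp
  show "orthonormal2 (fst (snd (plane_frame HH))) (snd (snd (plane_frame HH)))"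
    "HH = range (plane_param (fst (plane_frame HH)) (fst (snd (plane_frame HH))) (snd (snd (plane_frame HH))))"
    using someI_ex[OF ex] unfolding plane_frame_def by auto
qed

lemma hyperplane_eq_affine_hull:
  fixes n p :: pt3
  assumes n: "n \<noteq> 0" and abc: "{a,b,c} \<subseteq> {x. n \<bullet> (x - p) = 0}" and nc: "\<not> collinear {a,b,c}"
  shows "{x. n \<bullet> (x - p) = 0} = affine hull {a,b,c}"
proof -
  have eq: "{x. n \<bullet> (x - p) = 0} = {x. n \<bullet> x = n \<bullet> p}" by (auto simp: inner_diff_right)
  have aff: "affine {x. n \<bullet> (x - p) = 0}" unfolding eq by (rule affine_hyperplane)
  have d: "aff_dim {x. n \<bullet> (x - p) = 0} = 2" unfolding eq using n by simp
  have sub: "affine hull {a,b,c} \<subseteq> {x. n \<bullet> (x - p) = 0}" using abc aff by (simp add: hull_minimal)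
  have "aff_dim {a,b,c} \<le> int (card {a,b,c}) - 1" by (rule aff_dim_le_card) simp
  moreover have "card {a,b,c} \<le> 3" by (simp add: card_insert_le_m1)
  ultimately have le: "aff_dim {a,b,c} \<le> 2" by linarith
  have "aff_dim {a,b,c} > 1" using nc collinear_aff_dim[of "{a,b,c}"] by simp
  with le have d3: "aff_dim {a,b,c} = 2" by arith
  then have d2: "aff_dim (affine hull {a,b,c}) = 2" by simp
  show ?thesis
    by (rule affine_dim_equal[OF affine_affine_hull aff _ sub, symmetric]) (auto simp: d d2 d3)
qed

lemma tri_plane_eq_affine_hull: "tri_nondeg t \<Longrightarrow> tri_plane t = affine hull (tri_verts t)"
proof -
  assume nc: "tri_nondeg t"
  obtain a b c where t: "t = (a,b,c)" by (cases t)
  show ?thesis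
    using hyperplane_eq_affine_hull[of "tri_normal t" a b c a] tri_normal_nonzero[OF nc] tri_verts_subset_plane[of t] nc
    by (simp add: t tri_plane_def tri_normal_def tri_verts_def tri_nondeg_def)
qed

lemma range_plane_param_eq_affine_hull:
  assumes o: "orthonormal2 e1 e2" and nc: "tri_nondeg t" and sub: "tri_verts t \<subseteq> range (plane_param p e1 e2)"
  shows "range (plane_param p e1 e2) = affine hull (tri_verts t)"
proof -
  obtain a b c where t: "t = (a,b,c)" by (cases t)
  have "e1 \<times> e2 \<noteq> 0" using orthonormal2_cross_unit[OF o] by auto
  then show ?thesis
    using hyperplane_eq_affine_hull[of "e1 \<times> e2" a b c p] sub nc range_plane_param[OF o, of p]
    by (simp add: t tri_verts_def tri_nondeg_def)
qed

lemma is_plane_tri_plane: "tri_nondeg t \<Longrightarrow> is_plane (tri_plane t)"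
proof -
  assume nc: "tri_nondeg t"
  obtain a b c where t: "t = (a,b,c)" by (cases t)
  define w where "w = tri_normal t"
  have w0: "w \<noteq> 0" using tri_normal_nonzero[OF nc] by (simp add: w_def)
  define n where "n = (1 / norm w) *\<^sub>R w"
  have "n \<bullet> n = 1" using w0
    by (simp add: n_def power2_norm_eq_inner[symmetric] power2_eq_square)
  then obtain e1 e2 where o: "orthonormal2 e1 e2" and c: "e1 \<times> e2 = n" using orthonormal2_with_cross by blast
  have "range (plane_param a e1 e2) = {x. n \<bullet> (x - a) = 0}" using range_plane_param[OF o] c by simp
  also have "\<dots> = tri_plane t" using w0 by (auto simp: n_def t tri_plane_def w_def tri_normal_def)
  finally show ?thesis using o unfolding is_plane_def by metis
qed

lemma is_plane_unique:
  assumes P: "is_plane HH" and nc: "tri_nondeg t" and sub: "tri_verts t \<subseteq> HH"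
  shows "HH = tri_plane t"
proof -
  obtain p e1 e2 where o: "orthonormal2 e1 e2" and Pi: "HH = range (plane_param p e1 e2)"
    using P by (auto simp: is_plane_def)
  show ?thesis using range_plane_param_eq_affine_hull[OF o nc] sub Pi tri_plane_eq_affine_hull[OF nc] by simp
qed

lemma plane_measure_Union:
  assumes ok: "proper_triangles T" and P: "is_plane HH"
  shows "plane_measure HH (\<Union>(tri_hull ` T)) = sum triangle_area {t\<in>T. tri_verts t \<subseteq> HH}"
  unfolding plane_measure_def
  using measure_vimage_Union_triangles[OF plane_frame(1)[OF P] ok, of "fst (plane_frame HH)"] plane_frame(2)[OF P] by simp

lemma planar_area_Union:
  assumes ok: "proper_triangles T"
  shows "planar_area (\<Union>(tri_hull ` T)) = sum triangle_area T"
proof -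
  define S where "S = \<Union>(tri_hull ` T)"
  have fin: "finite T" using ok by (simp add: proper_triangles_def)
  have nc: "\<And>t. t \<in> T \<Longrightarrow> tri_nondeg t" using ok by (simp add: proper_triangles_def)
  have grp: "\<And>HH. HH \<in> tri_plane ` T \<Longrightarrow> {t\<in>T. tri_plane t = HH} = {t\<in>T. tri_verts t \<subseteq> HH}"
  proof -
    fix HH assume "HH \<in> tri_plane ` T"
    then obtain t0 where t0: "t0 \<in> T" "HH = tri_plane t0" by auto
    have "is_plane HH" using is_plane_tri_plane[OF nc[OF t0(1)]] t0 by simp
    then show "{t\<in>T. tri_plane t = HH} = {t\<in>T. tri_verts t \<subseteq> HH}"
      using tri_verts_subset_plane is_plane_unique nc by blast
  qed
  have set_eq: "{HH. is_plane HH \<and> plane_measure HH S \<noteq> 0} = tri_plane ` T"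
  proof (intro set_eqI iffI)
    fix HH assume "HH \<in> {HH. is_plane HH \<and> plane_measure HH S \<noteq> 0}"
    then have P: "is_plane HH" and l: "sum triangle_area {t\<in>T. tri_verts t \<subseteq> HH} \<noteq> 0"
      using plane_measure_Union[OF ok] by (auto simp: S_def)
    then obtain t where "t \<in> T" "tri_verts t \<subseteq> HH"
      by (metis (mono_tags, lifting) empty_Collect_eq sum.empty)
    then show "HH \<in> tri_plane ` T" using is_plane_unique[OF P nc] by blast
  next
    fix HH assume "HH \<in> tri_plane ` T"
    then obtain t0 where t0: "t0 \<in> T" "HH = tri_plane t0" by auto
    have P: "is_plane HH" using is_plane_tri_plane[OF nc[OF t0(1)]] t0 by simp
    have "triangle_area t0 \<le> sum triangle_area {t\<in>T. tri_verts t \<subseteq> HH}"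
      by (rule member_le_sum) (use t0 tri_verts_subset_plane fin triangle_area_nonneg in auto)
    then have "plane_measure HH S > 0"
      using triangle_area_pos[OF nc[OF t0(1)]] plane_measure_Union[OF ok P] by (simp add: S_def)
    then show "HH \<in> {HH. is_plane HH \<and> plane_measure HH S \<noteq> 0}" using P by simp
  qed
  have "sum triangle_area T = (\<Sum>HH\<in>tri_plane ` T. sum triangle_area {t\<in>T. tri_plane t = HH})"
    by (rule sum.image_gen[OF fin])
  also have "\<dots> = (\<Sum>HH\<in>tri_plane ` T. plane_measure HH S)"
  proof (rule sum.cong[OF refl])
    fix HH assume Pi: "HH \<in> tri_plane ` T"
    then have "is_plane HH" using is_plane_tri_plane nc by blast
    then show "sum triangle_area {t\<in>T. tri_plane t = HH} = plane_measure HH S"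
      using grp[OF Pi] plane_measure_Union[OF ok] by (simp add: S_def)
  qed
  finally show ?thesis using set_eq by (simp add: planar_area_def S_def)
qed

lemma surface_area_triangulation:
  assumes "triangulates T (frontier P)"
  shows "surface_area P = sum triangle_area T"
proof -
  have ok: "proper_triangles T" and fr: "frontier P = \<Union>(tri_hull ` T)" using assms by (auto simp: triangulates_iff)
  show ?thesis unfolding surface_area_def
  proof (rule the_equality)
    show "\<exists>T'. triangulates T' (frontier P) \<and> sum triangle_area T = (\<Sum>(a,b,c)\<in>T'. tri_area a b c)"
      using assms by (auto simp: sum_case_prod_tri_area)
  next
    fix A assume "\<exists>T'. triangulates T' (frontier P) \<and> A = (\<Sum>(a,b,c)\<in>T'. tri_area a b c)"
    then obtain T' where T': "triangulates T' (frontier P)" "A = sum triangle_area T'" by (auto simp: sum_case_prod_tri_area)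
    then have "A = planar_area (frontier P)" using planar_area_Union by (auto simp: triangulates_iff)
    also have "\<dots> = sum triangle_area T" using planar_area_Union[OF ok] fr by simp
    finally show "A = sum triangle_area T" .
  qed
qed

lemma surface_area_nonneg: "triangulates T (frontier P) \<Longrightarrow> surface_area P \<ge> 0"
  using surface_area_triangulation triangle_area_nonneg by (simp add: sum_nonneg)

lemma frontier_scaling:
  fixes S :: "pt3 set"
  assumes "k \<noteq> 0"
  shows "frontier ((\<lambda>x. k *\<^sub>R x) ` S) = (\<lambda>x. k *\<^sub>R x) ` frontier S"
proof -
  have lin: "linear (\<lambda>x::pt3. k *\<^sub>R x)" by (simp add: linear_scaleR)
  have inj: "inj (\<lambda>x::pt3. k *\<^sub>R x)" using assms by (auto simp: inj_def)
  show ?thesis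
    unfolding frontier_def
    by (simp add: closure_injective_linear_image[OF lin inj] interior_injective_linear_image[OF lin inj]
        image_set_diff[OF inj])
qed

definition tri_scale :: "real \<Rightarrow> pt3 \<times> pt3 \<times> pt3 \<Rightarrow> pt3 \<times> pt3 \<times> pt3" where
  "tri_scale k = (\<lambda>(a,b,c). (k *\<^sub>R a, k *\<^sub>R b, k *\<^sub>R c))"

lemma tri_hull_scale: "tri_hull (tri_scale k t) = (\<lambda>x. k *\<^sub>R x) ` tri_hull t"
  by (cases t) (simp add: tri_scale_def tri_hull_def convex_hull_scaling[symmetric])

lemma tri_nondeg_scale: "k \<noteq> 0 \<Longrightarrow> tri_nondeg (tri_scale k t) \<longleftrightarrow> tri_nondeg t"
proof (cases t)
  case (fields a b c)
  assume k: "k \<noteq> 0"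
  have "collinear {k *\<^sub>R a, k *\<^sub>R b, k *\<^sub>R c} \<longleftrightarrow> collinear {0, k *\<^sub>R (a - b), k *\<^sub>R (c - b)}"
    by (simp add: collinear_3 scaleR_diff_right)
  also have "\<dots> \<longleftrightarrow> collinear {0, a - b, c - b}" using k by (simp add: collinear_scaleR_iff)
  also have "\<dots> \<longleftrightarrow> collinear {a,b,c}" by (simp add: collinear_3)
  finally show ?thesis by (simp add: fields tri_scale_def tri_nondeg_def)
qed

lemma triangle_area_scale: "triangle_area (tri_scale k t) = k\<^sup>2 * triangle_area t"
proof (cases t)
  case (fields a b c)
  have "(k *\<^sub>R b - k *\<^sub>R a) \<times> (k *\<^sub>R c - k *\<^sub>R a) = (k * k) *\<^sub>R ((b - a) \<times> (c - a))"
    by (simp add: scaleR_diff_right[symmetric] cross_mult_left cross_mult_right)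
  then show ?thesis by (simp add: fields tri_scale_def triangle_area_def tri_area_def power2_eq_square)
qed

lemma inj_tri_scale: "k \<noteq> 0 \<Longrightarrow> inj (tri_scale k)"
  by (auto simp: inj_def tri_scale_def)

lemma triangulates_scale:
  assumes k: "k \<noteq> 0" and T: "triangulates T S"
  shows "triangulates (tri_scale k ` T) ((\<lambda>x. k *\<^sub>R x) ` S)"
proof -
  have ok: "proper_triangles T" and S: "S = \<Union>(tri_hull ` T)" using T by (auto simp: triangulates_iff)
  have inj: "inj (\<lambda>x::pt3. k *\<^sub>R x)" using k by (auto simp: inj_def)
  have "proper_triangles (tri_scale k ` T)"
    unfolding proper_triangles_def
  proof (intro conjI ballI impI)
    show "finite (tri_scale k ` T)" using ok by (simp add: proper_triangles_def)
    show "tri_nondeg t" if "t \<in> tri_scale k ` T" for t using that ok tri_nondeg_scale[OF k] by (auto simp: proper_triangles_def)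
    fix t1 t2 assume t: "t1 \<in> tri_scale k ` T" "t2 \<in> tri_scale k ` T" "t1 \<noteq> t2"
    then obtain s1 s2 where s: "s1 \<in> T" "s2 \<in> T" "t1 = tri_scale k s1" "t2 = tri_scale k s2" "s1 \<noteq> s2"
      by (metis imageE)
    have "rel_interior (tri_hull s1) \<inter> rel_interior (tri_hull s2) = {}" using ok s by (auto simp: proper_triangles_def)
    then show "rel_interior (tri_hull t1) \<inter> rel_interior (tri_hull t2) = {}"
      using s by (simp add: tri_hull_scale rel_interior_scaleR[OF k, symmetric] image_Int[OF inj, symmetric])
  qed
  moreover have "(\<lambda>x. k *\<^sub>R x) ` S = \<Union>(tri_hull ` tri_scale k ` T)"
    by (auto simp: S tri_hull_scale)
  ultimately show ?thesis by (simp add: triangulates_iff)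
qed

lemma surface_area_scale:
  assumes k: "k \<noteq> 0" and T: "triangulates T (frontier Q)"
  shows "surface_area ((\<lambda>x. k *\<^sub>R x) ` Q) = k\<^sup>2 * surface_area Q"
proof -
  have T': "triangulates (tri_scale k ` T) (frontier ((\<lambda>x. k *\<^sub>R x) ` Q))"
    using triangulates_scale[OF k T] frontier_scaling[OF k] by simp
  have "surface_area ((\<lambda>x. k *\<^sub>R x) ` Q) = sum triangle_area (tri_scale k ` T)" by (rule surface_area_triangulation[OF T'])
  also have "\<dots> = sum (triangle_area \<circ> tri_scale k) T"
    using inj_tri_scale[OF k] by (meson inj_on_subset subset_UNIV sum.reindex)
  also have "\<dots> = k\<^sup>2 * sum triangle_area T" by (simp add: triangle_area_scale sum_distrib_left)
  also have "\<dots> = k\<^sup>2 * surface_area Q" using surface_area_triangulation[OF T] by simp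
  finally show ?thesis .
qed

lemma tri_area_rotate: "tri_area a b c = tri_area b c a"
proof -
  have "(c - b) \<times> (a - b) = (b - a) \<times> (c - a)"
    by (simp add: cross3_def vec_eq_iff forall_3 vector_3 algebra_simps)
  then show ?thesis by (simp add: tri_area_def)
qed

definition other_vertex1 :: "pt3 \<Rightarrow> pt3 \<times> pt3 \<times> pt3 \<Rightarrow> pt3" where
  "other_vertex1 v = (\<lambda>(a,b,c). if a = v then b else if b = v then c else a)"
definition other_vertex2 :: "pt3 \<Rightarrow> pt3 \<times> pt3 \<times> pt3 \<Rightarrow> pt3" where
  "other_vertex2 v = (\<lambda>(a,b,c). if a = v then c else if b = v then a else b)"

lemma tri_rotate_to_vertex:
  assumes "v \<in> tri_verts t"
  shows "tri_verts t = {v, other_vertex1 v t, other_vertex2 v t}" "tri_hull t = convex hull {v, other_vertex1 v t, other_vertex2 v t}"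
    "triangle_area t = tri_area v (other_vertex1 v t) (other_vertex2 v t)"
    "tri_nondeg t \<longleftrightarrow> \<not> collinear {v, other_vertex1 v t, other_vertex2 v t}"
proof -
  obtain a b c where t: "t = (a,b,c)" by (cases t)
  show 1: "tri_verts t = {v, other_vertex1 v t, other_vertex2 v t}" using assms by (auto simp: t tri_verts_def other_vertex1_def other_vertex2_def)
  show "tri_hull t = convex hull {v, other_vertex1 v t, other_vertex2 v t}" using 1 by (simp add: tri_hull_eq)
  show "tri_nondeg t \<longleftrightarrow> \<not> collinear {v, other_vertex1 v t, other_vertex2 v t}" using 1 by (simp add: t tri_nondeg_def tri_verts_def)
  show "triangle_area t = tri_area v (other_vertex1 v t) (other_vertex2 v t)"
    using assms tri_area_rotate[of a b c] tri_area_rotate[of b c a]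
    by (auto simp: t triangle_area_def other_vertex1_def other_vertex2_def tri_verts_def)
qed

lemma in_convex_hull_3I:
  "0 \<le> x \<Longrightarrow> 0 \<le> y \<Longrightarrow> 0 \<le> z \<Longrightarrow> x + y + z = 1 \<Longrightarrow> p = x *\<^sub>R a + y *\<^sub>R b + z *\<^sub>R c
   \<Longrightarrow> p \<in> convex hull {a,b,c}"
  by (auto simp: convex_hull_3)

text \<open>Points of the triangle v, v + B, v + C are written v + \<beta> B + \<gamma> C; the line through
  v + s B and v + s' C is then \<beta> / s + \<gamma> / s' = 1.\<close>
lemma scaleR_combination_3:
  fixes v B C :: pt3
  shows "la *\<^sub>R (v + s1 *\<^sub>R B + s2 *\<^sub>R C) + lb *\<^sub>R (v + s3 *\<^sub>R B + s4 *\<^sub>R C) + lc *\<^sub>R (v + s5 *\<^sub>R B + s6 *\<^sub>R C)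
     = (la + lb + lc) *\<^sub>R v + (la * s1 + lb * s3 + lc * s5) *\<^sub>R B + (la * s2 + lb * s4 + lc * s6) *\<^sub>R C"
  by (simp add: algebra_simps)

lemma in_convex_hull_3_coords:
  fixes v B C :: pt3
  assumes "0 \<le> la" "0 \<le> lb" "0 \<le> lc" "la + lb + lc = 1"
    "la * s1 + lb * s3 + lc * s5 = \<beta>" "la * s2 + lb * s4 + lc * s6 = \<gamma>"
  shows "v + \<beta> *\<^sub>R B + \<gamma> *\<^sub>R C \<in>
     convex hull {v + s1 *\<^sub>R B + s2 *\<^sub>R C, v + s3 *\<^sub>R B + s4 *\<^sub>R C, v + s5 *\<^sub>R B + s6 *\<^sub>R C}"
  by (rule in_convex_hull_3I[OF assms(1-4)]) (simp add: scaleR_combination_3 assms)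

lemma upper_part_split:
  fixes v B C :: pt3
  assumes s: "0 < s" "s < 1" "0 < s'" "s' < 1"
    and bg: "0 \<le> \<beta>" "0 \<le> \<gamma>" "\<beta> + \<gamma> \<le> 1" and ge: "\<beta> / s + \<gamma> / s' \<ge> 1"
  shows "v + \<beta> *\<^sub>R B + \<gamma> *\<^sub>R C \<in> convex hull {v + s *\<^sub>R B + 0 *\<^sub>R C, v + 1 *\<^sub>R B + 0 *\<^sub>R C, v + 0 *\<^sub>R B + 1 *\<^sub>R C}
     \<union> convex hull {v + s *\<^sub>R B + 0 *\<^sub>R C, v + 0 *\<^sub>R B + 1 *\<^sub>R C, v + 0 *\<^sub>R B + s' *\<^sub>R C}"
proof (cases "\<beta> / s + \<gamma> \<ge> 1")
  case True
  have d: "1 - s \<noteq> 0" "1 - s > 0" using s by auto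
  have n: "\<beta> - s * (1 - \<gamma>) \<ge> 0" using True s by (simp add: field_simps)
  define la where "la = (1 - \<gamma> - \<beta>) / (1 - s)"
  define lb where "lb = (\<beta> - s * (1 - \<gamma>)) / (1 - s)"
  have "la + lb = ((1 - \<gamma> - \<beta>) + (\<beta> - s * (1 - \<gamma>))) / (1 - s)"
    by (simp only: la_def lb_def add_divide_distrib)
  also have "\<dots> = (1 - \<gamma>) * (1 - s) / (1 - s)" by (simp add: algebra_simps)
  also have "\<dots> = 1 - \<gamma>" using d by simp
  finally have e1: "la + lb + \<gamma> = 1" by simp
  have "la * s + lb = ((1 - \<gamma> - \<beta>) * s + (\<beta> - s * (1 - \<gamma>))) / (1 - s)"
    by (simp only: la_def lb_def add_divide_distrib times_divide_eq_left)
  also have "\<dots> = \<beta> * (1 - s) / (1 - s)" by (simp add: algebra_simps)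
  also have "\<dots> = \<beta>" using d by simp
  finally have e2: "la * s + lb * 1 + \<gamma> * 0 = \<beta>" by simp
  have p: "0 \<le> la" "0 \<le> lb" using d bg n by (auto simp: la_def lb_def)
  have "v + \<beta> *\<^sub>R B + \<gamma> *\<^sub>R C \<in> convex hull {v + s *\<^sub>R B + 0 *\<^sub>R C, v + 1 *\<^sub>R B + 0 *\<^sub>R C, v + 0 *\<^sub>R B + 1 *\<^sub>R C}"
    by (rule in_convex_hull_3_coords[OF p bg(2) e1 e2]) simp
  then show ?thesis by blast
next
  case False
  define q where "q = \<beta> / s"
  have d: "1 - s' \<noteq> 0" "1 - s' > 0" using s by auto
  have m2: "\<gamma> - s' * (1 - q) \<ge> 0" using ge s unfolding q_def by (simp add: field_simps)
  have m3: "1 - q - \<gamma> \<ge> 0" using False by (simp add: q_def)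
  define lb where "lb = (\<gamma> - s' * (1 - q)) / (1 - s')"
  define lc where "lc = (1 - q - \<gamma>) / (1 - s')"
  have "lb + lc = ((\<gamma> - s' * (1 - q)) + (1 - q - \<gamma>)) / (1 - s')"
    by (simp only: lc_def lb_def add_divide_distrib)
  also have "\<dots> = (1 - q) * (1 - s') / (1 - s')" by (simp add: algebra_simps)
  also have "\<dots> = 1 - q" using d by simp
  finally have e1: "q + lb + lc = 1" by simp
  have e2: "q * s + lb * 0 + lc * 0 = \<beta>" using s by (simp add: q_def)
  have "lb + lc * s' = ((\<gamma> - s' * (1 - q)) + (1 - q - \<gamma>) * s') / (1 - s')"
    by (simp only: lc_def lb_def add_divide_distrib times_divide_eq_left)
  also have "\<dots> = \<gamma> * (1 - s') / (1 - s')" by (simp add: algebra_simps)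
  also have "\<dots> = \<gamma>" using d by simp
  finally have e3: "q * 0 + lb * 1 + lc * s' = \<gamma>" by simp
  have p: "0 \<le> q" "0 \<le> lb" "0 \<le> lc" using d bg m2 m3 s by (auto simp: lc_def lb_def q_def)
  have "v + \<beta> *\<^sub>R B + \<gamma> *\<^sub>R C \<in> convex hull {v + s *\<^sub>R B + 0 *\<^sub>R C, v + 0 *\<^sub>R B + 1 *\<^sub>R C, v + 0 *\<^sub>R B + s' *\<^sub>R C}"
    by (rule in_convex_hull_3_coords[OF p e1 e2 e3])
  then show ?thesis by blast
qed

lemma lower_part_in_tip:
  fixes v B C :: pt3
  assumes s: "0 < s" "0 < s'"
    and bg: "0 \<le> \<beta>" "0 \<le> \<gamma>" and le: "\<beta> / s + \<gamma> / s' \<le> 1"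
  shows "v + \<beta> *\<^sub>R B + \<gamma> *\<^sub>R C \<in> convex hull {v + 0 *\<^sub>R B + 0 *\<^sub>R C, v + s *\<^sub>R B + 0 *\<^sub>R C, v + 0 *\<^sub>R B + s' *\<^sub>R C}"
  using s bg le
  by (intro in_convex_hull_3_coords[where la = "1 - \<beta> / s - \<gamma> / s'" and lb = "\<beta> / s" and lc = "\<gamma> / s'"])
     (auto simp: field_simps)

lemma level_line_segment:
  fixes v B C :: pt3
  assumes s: "0 < s" "0 < s'"
    and bg: "0 \<le> \<beta>" "0 \<le> \<gamma>" and eq: "\<beta> / s + \<gamma> / s' = 1"
  shows "v + \<beta> *\<^sub>R B + \<gamma> *\<^sub>R C \<in> closed_segment (v + s *\<^sub>R B) (v + s' *\<^sub>R C)"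
proof -
  have "\<beta> / s \<ge> 0" using bg s by simp
  then have g: "\<gamma> / s' \<le> 1" "0 \<le> \<gamma> / s'" using eq bg s by (linarith, simp)
  have b: "1 - \<gamma> / s' = \<beta> / s" using eq by simp
  have "(1 - \<gamma> / s') *\<^sub>R (v + s *\<^sub>R B) + (\<gamma> / s') *\<^sub>R (v + s' *\<^sub>R C)
     = ((1 - \<gamma> / s') + \<gamma> / s') *\<^sub>R v + ((1 - \<gamma> / s') * s) *\<^sub>R B + ((\<gamma> / s') * s') *\<^sub>R C"
    by (simp add: algebra_simps)
  also have "\<dots> = v + \<beta> *\<^sub>R B + \<gamma> *\<^sub>R C" unfolding b using s by (simp add: eq)
  finally have "v + \<beta> *\<^sub>R B + \<gamma> *\<^sub>R C = (1 - \<gamma> / s') *\<^sub>R (v + s *\<^sub>R B) + (\<gamma> / s') *\<^sub>R (v + s' *\<^sub>R C)"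
    by simp
  then show ?thesis using g unfolding in_segment by blast
qed

locale convex_vertex =
  fixes P :: "pt3 set" and v u :: pt3 and r :: real and T :: "(pt3 \<times> pt3 \<times> pt3) set"
  assumes compP: "compact P" and closure_interior_P: "closure (interior P) = P"
    and triT: "triangulates T (frontier P)"
    and vP: "v \<in> P" and u1: "norm u = 1" and rpos: "r > 0"
    and cvx: "convex (P \<inter> cball v r)"
    and pos: "\<And>x. x \<in> P \<inter> cball v r \<Longrightarrow> x \<noteq> v \<Longrightarrow> inner (x - v) u > 0"
begin

lemma proper_T: "proper_triangles T" and frontier_eq_Union_T: "frontier P = \<Union>(tri_hull ` T)"
  using triT by (auto simp: triangulates_iff)

lemma closed_P: "closed P" using compP compact_imp_closed by blast

lemma frontier_subset_P: "frontier P \<subseteq> P"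
  using closed_P by (simp add: frontier_subset_closed)

lemma u_inner_self: "u \<bullet> u = 1" using u1 by (simp add: norm_eq_1)

lemma convex_subset_inner_pos:
  assumes X: "convex X" "X \<subseteq> P" "v \<in> X" and a: "a \<in> X" "a \<noteq> v"
  shows "(a - v) \<bullet> u > 0"
proof -
  define e where "e = min 1 (r / norm (a - v))"
  have na: "norm (a - v) > 0" using a by simp
  have e: "0 < e" "e \<le> 1" "e * norm (a - v) \<le> r"
    using na rpos by (auto simp: e_def min_def field_simps)
  define a' where "a' = (1 - e) *\<^sub>R v + e *\<^sub>R a"
  have "a' \<in> X" using X(1) X(3) a(1) e by (simp add: a'_def convexD)
  moreover have a'v: "a' - v = e *\<^sub>R (a - v)" by (simp add: a'_def algebra_simps)
  then have "norm (a' - v) \<le> r" using e by simp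
  ultimately have "a' \<in> P \<inter> cball v r" using X(2) by (auto simp: dist_norm norm_minus_commute)
  moreover have "a' \<noteq> v" using a'v e a by auto
  ultimately have "(a' - v) \<bullet> u > 0" using pos by blast
  then show ?thesis using a'v e by (simp add: zero_less_mult_iff)
qed

lemma v_extreme_point:
  assumes X: "convex X" "X \<subseteq> P" "v \<in> X"
  shows "v extreme_point_of X"
  unfolding extreme_point_of_def
proof (intro conjI ballI notI)
  show "v \<in> X" by fact
  fix a b assume ab: "a \<in> X" "b \<in> X" "v \<in> open_segment a b"
  then obtain m where m: "0 < m" "m < 1" "v = (1 - m) *\<^sub>R a + m *\<^sub>R b" and "a \<noteq> b"
    by (auto simp: in_segment)
  have av: "a \<noteq> v" "b \<noteq> v" using ab(3) by (auto simp: open_segment_def)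
  have "(a - v) \<bullet> u > 0" "(b - v) \<bullet> u > 0" using convex_subset_inner_pos[OF X] ab av by auto
  moreover have "(1 - m) *\<^sub>R (a - v) + m *\<^sub>R (b - v) = 0"
    using m(3) by (simp add: algebra_simps)
  then have "(1 - m) * ((a - v) \<bullet> u) + m * ((b - v) \<bullet> u) = 0"
    by (metis inner_add_left inner_scaleR_left inner_zero_left)
  ultimately show False using m by (smt (verit) mult_pos_pos)
qed

lemma v_in_frontier: "v \<in> frontier P"
proof -
  have "v \<notin> interior P"
  proof
    assume "v \<in> interior P"
    then obtain e where e: "e > 0" "ball v e \<subseteq> P" by (meson open_contains_ball open_interior interior_subset subset_trans)
    define e' where "e' = min (e/2) r"
    define x where "x = v - e' *\<^sub>R u"
    have e': "0 < e'" "e' < e" "e' \<le> r" using e rpos by (auto simp: e'_def)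
    have "norm (x - v) = e'" using e' u1 by (simp add: x_def)
    then have "x \<in> P \<inter> cball v r" using e e' by (auto simp: dist_norm norm_minus_commute intro!: subsetD[OF e(2)])
    moreover have "x \<noteq> v" using e' u1 by (auto simp: x_def)
    ultimately have "(x - v) \<bullet> u > 0" using pos by blast
    then show False using e' u_inner_self by (simp add: x_def)
  qed
  then show ?thesis using vP closed_P by (simp add: frontier_def closure_closed)
qed

definition lateral where "lateral = {t\<in>T. v \<in> tri_hull t}"

lemma finite_T: "finite T" using proper_T by (simp add: proper_triangles_def)
lemma tri_nondeg_T: "t \<in> T \<Longrightarrow> tri_nondeg t" using proper_T by (simp add: proper_triangles_def)
lemma tri_hull_subset_P: "t \<in> T \<Longrightarrow> tri_hull t \<subseteq> P" using frontier_eq_Union_T frontier_subset_P by auto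

lemma lateral_has_vertex_v: "t \<in> lateral \<Longrightarrow> v \<in> tri_verts t"
proof -
  assume t: "t \<in> lateral"
  then have "v extreme_point_of tri_hull t"
    using v_extreme_point[of "tri_hull t"] tri_hull_subset_P by (auto simp: lateral_def tri_hull_eq)
  then show ?thesis by (simp add: tri_hull_eq extreme_point_of_convex_hull)
qed

lemma lateral_nonempty: "lateral \<noteq> {}"
  using v_in_frontier frontier_eq_Union_T by (auto simp: lateral_def)

lemma finite_lateral: "finite lateral" using finite_T by (simp add: lateral_def)

abbreviation "vb t \<equiv> other_vertex1 v t"
abbreviation "vc t \<equiv> other_vertex2 v t"

lemma lateral_props:
  assumes t: "t \<in> lateral"
  shows "tri_hull t = convex hull {v, vb t, vc t}" "triangle_area t = tri_area v (vb t) (vc t)"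
    "\<not> collinear {v, vb t, vc t}" "vb t \<noteq> v" "vc t \<noteq> v" "vb t \<noteq> vc t"
    "(vb t - v) \<bullet> u > 0" "(vc t - v) \<bullet> u > 0"
proof -
  have tT: "t \<in> T" using t by (simp add: lateral_def)
  note R = tri_rotate_to_vertex[OF lateral_has_vertex_v[OF t]]
  show h: "tri_hull t = convex hull {v, vb t, vc t}" by (rule R(2))
  show "triangle_area t = tri_area v (vb t) (vc t)" by (rule R(3))
  show nc: "\<not> collinear {v, vb t, vc t}" using R(4) tri_nondeg_T[OF tT] by simp
  show "vb t \<noteq> v" "vc t \<noteq> v" "vb t \<noteq> vc t" using nc by (auto simp: collinear_2 insert_commute)
  have X: "convex (tri_hull t)" "tri_hull t \<subseteq> P" "v \<in> tri_hull t"
    using tri_hull_subset_P[OF tT] t by (auto simp: lateral_def tri_hull_eq)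
  show "(vb t - v) \<bullet> u > 0" "(vc t - v) \<bullet> u > 0"
    using convex_subset_inner_pos[OF X] \<open>vb t \<noteq> v\<close> \<open>vc t \<noteq> v\<close> h by (auto simp: hull_inc)
qed

definition min_height where "min_height = Min ((\<lambda>t. min ((vb t - v) \<bullet> u) ((vc t - v) \<bullet> u)) ` lateral)"
definition max_edge where "max_edge = Max ((\<lambda>t. max (norm (vb t - v)) (norm (vc t - v))) ` lateral)"
definition slope_const where "slope_const = max_edge / min_height"

lemma min_height_pos: "min_height > 0"
  using finite_lateral lateral_nonempty lateral_props(7,8) by (auto simp: min_height_def)

lemma min_height_le: "t \<in> lateral \<Longrightarrow> min_height \<le> (vb t - v) \<bullet> u \<and> min_height \<le> (vc t - v) \<bullet> u"
  using finite_lateral unfolding min_height_def by (metis (no_types, lifting) Min_le finite_imageI image_eqI min.bounded_iff)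

lemma max_edge_ge: "t \<in> lateral \<Longrightarrow> norm (vb t - v) \<le> max_edge \<and> norm (vc t - v) \<le> max_edge"
  using finite_lateral unfolding max_edge_def by (metis (no_types, lifting) Max_ge finite_imageI image_eqI max.bounded_iff)

lemma slope_const_nonneg: "slope_const \<ge> 0"
proof -
  obtain t where "t \<in> lateral" using lateral_nonempty by blast
  then have "max_edge \<ge> 0" using max_edge_ge[of t] by (meson norm_ge_zero order_trans)
  then show ?thesis using min_height_pos by (simp add: slope_const_def)
qed

lemma lateral_cone_bound:
  assumes t: "t \<in> lateral" and y: "y \<in> tri_hull t"
  shows "(y - v) \<bullet> u \<ge> 0" "norm (y - v) \<le> slope_const * ((y - v) \<bullet> u)"
proof -
  obtain a b c where abc: "0 \<le> a" "0 \<le> b" "0 \<le> c" "a + b + c = 1"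
    and y': "y = a *\<^sub>R v + b *\<^sub>R vb t + c *\<^sub>R vc t"
    using y lateral_props(1)[OF t] by (auto simp: convex_hull_3)
  have yv: "y - v = b *\<^sub>R (vb t - v) + c *\<^sub>R (vc t - v)"
  proof -
    have "y - v = y - (a + b + c) *\<^sub>R v" using abc(4) by simp
    then show ?thesis by (simp add: y' algebra_simps)
  qed
  have inn: "(y - v) \<bullet> u = b * ((vb t - v) \<bullet> u) + c * ((vc t - v) \<bullet> u)"
    by (simp add: yv inner_add_left)
  have ml: "min_height \<le> (vb t - v) \<bullet> u" "min_height \<le> (vc t - v) \<bullet> u" using min_height_le[OF t] by auto
  have ge: "(y - v) \<bullet> u \<ge> (b + c) * min_height"
    using inn ml abc by (simp add: distrib_right add_mono mult_left_mono)
  show "(y - v) \<bullet> u \<ge> 0" using ge min_height_pos abc by (smt (verit) mult_nonneg_nonneg)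
  have "norm (y - v) \<le> b * norm (vb t - v) + c * norm (vc t - v)"
    using abc by (simp add: yv) (metis abs_of_nonneg norm_scaleR norm_triangle_le order_refl add_mono)
  also have "\<dots> \<le> (b + c) * max_edge"
    using max_edge_ge[OF t] abc by (simp add: distrib_right add_mono mult_left_mono)
  also have "\<dots> = slope_const * ((b + c) * min_height)" using min_height_pos by (simp add: slope_const_def)
  also have "\<dots> \<le> slope_const * ((y - v) \<bullet> u)" using ge slope_const_nonneg by (simp add: mult_left_mono)
  finally show "norm (y - v) \<le> slope_const * ((y - v) \<bullet> u)" .
qed

definition lateral_gap where "lateral_gap = Min (insert r ((\<lambda>t. infdist v (tri_hull t)) ` (T - lateral)))"

lemma lateral_gap_pos: "lateral_gap > 0"
proof -
  have "infdist v (tri_hull t) > 0" if "t \<in> T - lateral" for t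
  proof (rule infdist_pos_not_in_closed)
    show "closed (tri_hull t)" by (simp add: tri_hull_eq compact_imp_closed finite_imp_compact_convex_hull tri_verts_def split: prod.splits)
    show "tri_hull t \<noteq> {}" by (simp add: tri_hull_eq tri_verts_def split: prod.splits)
    show "v \<notin> tri_hull t" using that by (simp add: lateral_def)
  qed
  then show ?thesis using finite_T rpos by (auto simp: lateral_gap_def)
qed

lemma lateral_gap_le_r: "lateral_gap \<le> r" using finite_T by (simp add: lateral_gap_def)

lemma nonlateral_far: "t \<in> T \<Longrightarrow> t \<notin> lateral \<Longrightarrow> x \<in> tri_hull t \<Longrightarrow> lateral_gap \<le> norm (x - v)"
proof -
  assume t: "t \<in> T" "t \<notin> lateral" and x: "x \<in> tri_hull t"
  have "lateral_gap \<le> infdist v (tri_hull t)" using finite_T t by (simp add: lateral_gap_def)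
  also have "\<dots> \<le> dist v x" using x by (rule infdist_le)
  finally show ?thesis by (simp add: dist_norm norm_minus_commute)
qed

definition near_radius where "near_radius = lateral_gap / 4"

lemma near_radius_pos: "near_radius > 0" using lateral_gap_pos by (simp add: near_radius_def)

lemma frontier_near_v_lateral:
  assumes y: "y \<in> frontier P" and n: "norm (y - v) < lateral_gap"
  shows "\<exists>t\<in>lateral. y \<in> tri_hull t"
proof -
  obtain t where t: "t \<in> T" "y \<in> tri_hull t" using y frontier_eq_Union_T by auto
  have "t \<in> lateral" using nonlateral_far[OF t(1) _ t(2)] n by force
  then show ?thesis using t by blast
qed

lemma descend_to_lateral:
  assumes x: "x \<in> P" "norm (x - v) < near_radius"
  shows "\<exists>s. 0 \<le> s \<and> s \<le> (x - v) \<bullet> u \<and> (\<exists>t\<in>lateral. x - s *\<^sub>R u \<in> tri_hull t)"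
proof -
  define i where "i = (x - v) \<bullet> u"
  have xK: "x \<in> P \<inter> cball v r" using x lateral_gap_le_r near_radius_pos by (auto simp: near_radius_def dist_norm norm_minus_commute)
  have i0: "i \<ge> 0" using pos[OF xK] by (cases "x = v") (auto simp: i_def)
  have ile: "i \<le> norm (x - v)" using Cauchy_Schwarz_ineq2[of "x - v" u] u1 by (simp add: i_def)
  define z where "z = x - i *\<^sub>R u"
  show ?thesis
  proof (cases "z = v")
    case True
    then obtain t where "t \<in> lateral" "v \<in> tri_hull t" using v_in_frontier frontier_eq_Union_T by (auto simp: lateral_def)
    then show ?thesis using True i0 unfolding z_def i_def by (intro exI[of _ "(x - v) \<bullet> u"]) auto
  next
    case False
    have zv: "(z - v) \<bullet> u = 0" using u_inner_self by (simp add: z_def i_def inner_diff_left)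
    have nz: "norm (z - v) \<le> 2 * norm (x - v)"
    proof -
      have "z - v = (x - v) - i *\<^sub>R u" by (simp add: z_def algebra_simps)
      then have "norm (z - v) \<le> norm (x - v) + norm (i *\<^sub>R u)"
        using norm_triangle_ineq4 by metis
      then show ?thesis using u1 i0 ile by simp
    qed
    have zP: "z \<notin> P"
    proof
      assume "z \<in> P"
      moreover have "norm (z - v) \<le> r" using nz x lateral_gap_le_r lateral_gap_pos by (simp add: near_radius_def)
      ultimately have "z \<in> P \<inter> cball v r" by (auto simp: dist_norm norm_minus_commute)
      then show False using pos False zv by fastforce
    qed
    have "closed_segment x z \<inter> frontier P \<noteq> {}"
      by (rule connected_Int_frontier) (use x zP in auto)
    then obtain y where y: "y \<in> closed_segment x z" "y \<in> frontier P" by blast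
    then obtain m where m: "0 \<le> m" "m \<le> 1" "y = (1 - m) *\<^sub>R x + m *\<^sub>R z" by (auto simp: in_segment)
    have yx: "y = x - (m * i) *\<^sub>R u" by (simp add: m(3) z_def algebra_simps)
    have si: "0 \<le> m * i" "m * i \<le> i" using m i0 by (auto simp: mult_left_le_one_le)
    have "norm (y - v) \<le> norm (x - v) + m * i"
    proof -
      have "y - v = (x - v) - (m * i) *\<^sub>R u" by (simp add: yx algebra_simps)
      then have "norm (y - v) \<le> norm (x - v) + norm ((m * i) *\<^sub>R u)"
        using norm_triangle_ineq4 by metis
      then show ?thesis using u1 si by simp
    qed
    then have "norm (y - v) < lateral_gap" using si ile x by (simp add: near_radius_def)
    then obtain t where "t \<in> lateral" "y \<in> tri_hull t" using frontier_near_v_lateral y(2) by blast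
    then show ?thesis using si yx by (auto simp: i_def)
  qed
qed

definition cone_const where "cone_const = slope_const + 1"

lemma cone_const_ge1: "cone_const \<ge> 1" using slope_const_nonneg by (simp add: cone_const_def)

lemma norm_le_cone_const:
  assumes x: "x \<in> P" "norm (x - v) < near_radius"
  shows "norm (x - v) \<le> cone_const * ((x - v) \<bullet> u)"
proof -
  obtain s t where s: "0 \<le> s" "s \<le> (x - v) \<bullet> u" and t: "t \<in> lateral" "x - s *\<^sub>R u \<in> tri_hull t"
    using descend_to_lateral[OF x] by blast
  define y where "y = x - s *\<^sub>R u"
  have iy: "(y - v) \<bullet> u = (x - v) \<bullet> u - s" using u_inner_self by (simp add: y_def inner_diff_left)
  have "norm (y - v) \<le> slope_const * ((y - v) \<bullet> u)" using lateral_cone_bound(2)[OF t(1)] t(2) by (simp add: y_def)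
  also have "\<dots> \<le> slope_const * ((x - v) \<bullet> u)" using iy s slope_const_nonneg by (simp add: mult_left_mono)
  finally have ny: "norm (y - v) \<le> slope_const * ((x - v) \<bullet> u)" .
  have "x - v = (y - v) + s *\<^sub>R u" by (simp add: y_def algebra_simps)
  then have "norm (x - v) \<le> norm (y - v) + norm (s *\<^sub>R u)"
    using norm_triangle_ineq by metis
  also have "\<dots> \<le> slope_const * ((x - v) \<bullet> u) + (x - v) \<bullet> u" using ny s u1 by simp
  finally show ?thesis by (simp add: cone_const_def algebra_simps)
qed

lemma height_threshold_exists: "\<exists>d>0. \<forall>x\<in>P \<inter> cball v r. (x - v) \<bullet> u < d \<longrightarrow> norm (x - v) < near_radius"
proof -
  define F where "F = (P \<inter> cball v r) \<inter> {x. near_radius \<le> norm (x - v)}"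
  show ?thesis
  proof (cases "F = {}")
    case True
    then show ?thesis by (intro exI[of _ 1]) (auto simp: F_def)
  next
    case False
    have "closed {x. near_radius \<le> norm (x - v)}"
      by (rule closed_Collect_le) (intro continuous_intros)+
    then have cF: "compact F"
      unfolding F_def by (intro compact_Int_closed compP closed_cball)
    have "continuous_on F (\<lambda>x. (x - v) \<bullet> u)" by (intro continuous_intros)
    then obtain x0 where x0: "x0 \<in> F" "\<And>y. y \<in> F \<Longrightarrow> (x0 - v) \<bullet> u \<le> (y - v) \<bullet> u"
      using continuous_attains_inf[OF cF False] by blast
    have "x0 \<noteq> v" using x0(1) near_radius_pos by (auto simp: F_def)
    then have d: "(x0 - v) \<bullet> u > 0" using x0(1) pos by (auto simp: F_def)
    show ?thesis
    proof (intro exI[of _ "(x0 - v) \<bullet> u"] conjI d ballI impI)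
      fix x assume "x \<in> P \<inter> cball v r" "(x - v) \<bullet> u < (x0 - v) \<bullet> u"
      then show "norm (x - v) < near_radius" using x0(2)[of x] by (force simp: F_def)
    qed
  qed
qed

definition height_threshold where "height_threshold = (SOME d. d > 0 \<and> (\<forall>x\<in>P \<inter> cball v r. (x - v) \<bullet> u < d \<longrightarrow> norm (x - v) < near_radius))"

lemma height_threshold: "height_threshold > 0" "\<And>x. x \<in> P \<inter> cball v r \<Longrightarrow> (x - v) \<bullet> u < height_threshold \<Longrightarrow> norm (x - v) < near_radius"
  using someI_ex[OF height_threshold_exists] unfolding height_threshold_def[symmetric] by auto

lemma interior_point_exists: "\<exists>p. p \<in> interior P \<and> norm (p - v) < near_radius"
proof -
  have "v \<in> closure (interior P)" using closure_interior_P vP by simp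
  then obtain p where "p \<in> interior P" "dist p v < near_radius" using near_radius_pos closure_approachable by blast
  then show ?thesis by (auto simp: dist_norm)
qed

definition int_pt where "int_pt = (SOME p. p \<in> interior P \<and> norm (p - v) < near_radius)"

lemma int_pt: "int_pt \<in> interior P" "norm (int_pt - v) < near_radius"
  using someI_ex[OF interior_point_exists] unfolding int_pt_def[symmetric] by auto

lemma int_pt_height_pos: "(int_pt - v) \<bullet> u > 0"
proof -
  have "int_pt \<noteq> v" using int_pt(1) v_in_frontier by (auto simp: frontier_def)
  moreover have "int_pt \<in> P \<inter> cball v r" using int_pt interior_subset lateral_gap_le_r lateral_gap_pos
    by (auto simp: near_radius_def dist_norm norm_minus_commute)
  ultimately show ?thesis using pos by blast
qed

text \<open>For 0 < t < t_bound the cap below height t lies within near_radius of v, the cutting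
  plane separates v from the other vertices of every lateral face, and it passes below the
  interior point int_pt.\<close>
definition t_bound where "t_bound = Min {height_threshold, min_height / 2, near_radius / (2 * cone_const), (int_pt - v) \<bullet> u}"

lemma t_bound_pos: "t_bound > 0"
  using height_threshold min_height_pos near_radius_pos cone_const_ge1 int_pt_height_pos by (simp add: t_bound_def)

end

locale truncation = convex_vertex +
  fixes t :: real
  assumes t_pos: "0 < t" and t_less_bound: "t < t_bound"
begin

lemma t_less: "t < height_threshold" "t < min_height / 2" "t < near_radius / (2 * cone_const)" "t < (int_pt - v) \<bullet> u"
  using t_less_bound by (auto simp: t_bound_def)

lemma cone_const_t: "cone_const * t < near_radius / 2" using t_less(3) cone_const_ge1 by (simp add: field_simps)

definition cap where "cap = {x. x \<in> ball v r \<and> (x - v) \<bullet> u < t}"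
definition trunc where "trunc = P - cap"
definition base where "base = {x\<in>P. x \<in> ball v r \<and> (x - v) \<bullet> u = t}"

lemma truncate_eq_trunc: "truncate P v u r t = trunc" by (simp add: truncate_def trunc_def cap_def)

lemma open_cap: "open cap"
proof -
  have "cap = ball v r \<inter> {x. (x - v) \<bullet> u < t}" by (auto simp: cap_def)
  moreover have "open {x. (x - v) \<bullet> u < t}"
    by (rule open_Collect_less) (intro continuous_intros)+
  ultimately show ?thesis by auto
qed

lemma closed_trunc: "closed trunc" using closed_P open_cap by (simp add: trunc_def closed_Diff)

lemma cap_norm_bound: "x \<in> P \<Longrightarrow> x \<in> cap \<Longrightarrow> norm (x - v) < cone_const * t"
proof -
  assume x: "x \<in> P" "x \<in> cap"
  then have xK: "x \<in> P \<inter> cball v r" by (auto simp: cap_def dist_norm norm_minus_commute)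
  have it: "(x - v) \<bullet> u < t" using x by (simp add: cap_def)
  then have "norm (x - v) < near_radius" using height_threshold(2)[OF xK] t_less by simp
  then have "norm (x - v) \<le> cone_const * ((x - v) \<bullet> u)" using norm_le_cone_const x by blast
  also have "\<dots> < cone_const * t" using it cone_const_ge1 by simp
  finally show ?thesis .
qed

lemma lateral_low_small:
  assumes "\<tau> \<in> lateral" "y \<in> tri_hull \<tau>" "(y - v) \<bullet> u \<le> t"
  shows "norm (y - v) < near_radius / 2"
proof -
  have "norm (y - v) \<le> slope_const * ((y - v) \<bullet> u)" using lateral_cone_bound assms by blast
  also have "\<dots> \<le> slope_const * t" using assms(3) slope_const_nonneg by (simp add: mult_left_mono)
  also have "\<dots> < cone_const * t" using t_pos by (simp add: cone_const_def)
  finally show ?thesis using cone_const_t by simp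
qed

lemma near_radius_less_r: "near_radius < r" using lateral_gap_le_r lateral_gap_pos rpos by (simp add: near_radius_def)

lemma frontier_trunc_subset: "frontier trunc \<subseteq> (frontier P - cap) \<union> base"
proof
  fix x assume x: "x \<in> frontier trunc"
  then have xQ: "x \<in> trunc" using closed_trunc by (simp add: frontier_def closure_closed)
  show "x \<in> (frontier P - cap) \<union> base"
  proof (rule ccontr)
    assume nx: "x \<notin> (frontier P - cap) \<union> base"
    have xP: "x \<in> P" "x \<notin> cap" using xQ by (auto simp: trunc_def)
    then have xi: "x \<in> interior P" using nx closed_P by (auto simp: frontier_def closure_closed)
    define Ob where "Ob = interior P \<inter> ({y. (y - v) \<bullet> u > t} \<union> {y. norm (y - v) > r})"
    have oO: "open Ob"
    proof -
      have "open {y. (y - v) \<bullet> u > t}" by (rule open_Collect_less) (intro continuous_intros)+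
      moreover have "open {y. norm (y - v) > r}" by (rule open_Collect_less) (intro continuous_intros)+
      ultimately show ?thesis by (auto simp: Ob_def)
    qed
    have OQ: "Ob \<subseteq> trunc" using interior_subset by (auto simp: Ob_def trunc_def cap_def dist_norm norm_minus_commute)
    have "x \<in> Ob"
    proof (cases "(x - v) \<bullet> u > t")
      case True then show ?thesis using xi by (simp add: Ob_def)
    next
      case False
      have "\<not> norm (x - v) < r"
      proof
        assume "norm (x - v) < r"
        then have "x \<in> ball v r" by (simp add: dist_norm norm_minus_commute)
        then have "(x - v) \<bullet> u = t" using xP False by (simp add: cap_def)
        then show False using nx xP \<open>x \<in> ball v r\<close> by (simp add: base_def)
      qed
      moreover have "norm (x - v) \<noteq> r"
      proof
        assume nr: "norm (x - v) = r"
        then have "x \<in> P \<inter> cball v r" using xP by (simp add: dist_norm norm_minus_commute)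
        moreover have "\<not> norm (x - v) < near_radius" using nr near_radius_less_r by simp
        ultimately have "(x - v) \<bullet> u \<ge> height_threshold" using height_threshold(2) by force
        then show False using False t_less by simp
      qed
      ultimately show ?thesis using xi by (simp add: Ob_def)
    qed
    then have "x \<in> interior trunc" using oO OQ interior_maximal by blast
    then show False using x by (simp add: frontier_def)
  qed
qed

lemma base_subset_closure_cap: "base \<subseteq> closure cap"
proof
  fix x assume x: "x \<in> base"
  show "x \<in> closure cap"
    unfolding closure_approachable
  proof (intro allI impI)
    fix e :: real assume e: "e > 0"
    have nx: "norm (x - v) < r" using x by (simp add: base_def dist_norm norm_minus_commute)
    define e' where "e' = min (e/2) ((r - norm (x - v)) / 2)"
    have e': "0 < e'" "e' < e" "norm (x - v) + e' < r"
      using e nx by (auto simp: e'_def min_def field_simps)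
    define y where "y = x - e' *\<^sub>R u"
    have "norm (y - v) \<le> norm (x - v) + norm (e' *\<^sub>R u)"
    proof -
      have "y - v = (x - v) - e' *\<^sub>R u" by (simp add: y_def algebra_simps)
      then show ?thesis using norm_triangle_ineq4 by metis
    qed
    then have "y \<in> ball v r" using e' u1 by (simp add: dist_norm norm_minus_commute)
    moreover have "(y - v) \<bullet> u < t" using x e' u_inner_self by (simp add: y_def base_def inner_diff_left)
    moreover have "dist y x < e" using e' u1 by (simp add: y_def dist_norm)
    ultimately show "\<exists>y\<in>cap. dist y x < e" by (auto simp: cap_def)
  qed
qed

lemma frontier_trunc: "frontier trunc = (frontier P - cap) \<union> base"
proof
  show "(frontier P - cap) \<union> base \<subseteq> frontier trunc"
  proof
    fix x assume x: "x \<in> (frontier P - cap) \<union> base"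
    have xQ: "x \<in> trunc" using x frontier_subset_P by (auto simp: trunc_def base_def cap_def)
    have "x \<notin> interior trunc"
    proof (cases "x \<in> base")
      case False
      then have "x \<notin> interior P" using x by (auto simp: frontier_def)
      moreover have "interior trunc \<subseteq> interior P" by (simp add: trunc_def interior_mono)
      ultimately show ?thesis by blast
    next
      case True
      have "interior trunc \<inter> cap = {}" using interior_subset by (auto simp: trunc_def)
      then have "interior trunc \<inter> closure cap = {}" by (simp add: open_Int_closure_eq_empty)
      then show ?thesis using True base_subset_closure_cap by blast
    qed
    then show "x \<in> frontier trunc" using xQ by (simp add: frontier_def closure_closed closed_trunc)
  qed
qed (rule frontier_trunc_subset)

definition ratio_b where "ratio_b \<tau> = t / ((vb \<tau> - v) \<bullet> u)"
definition ratio_c where "ratio_c \<tau> = t / ((vc \<tau> - v) \<bullet> u)"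
definition cut_b where "cut_b \<tau> = v + ratio_b \<tau> *\<^sub>R (vb \<tau> - v)"
definition cut_c where "cut_c \<tau> = v + ratio_c \<tau> *\<^sub>R (vc \<tau> - v)"

lemma cut_props:
  assumes "\<tau> \<in> lateral"
  shows "0 < ratio_b \<tau>" "ratio_b \<tau> < 1" "0 < ratio_c \<tau>" "ratio_c \<tau> < 1"
    "(cut_b \<tau> - v) \<bullet> u = t" "(cut_c \<tau> - v) \<bullet> u = t"
proof -
  have i: "(vb \<tau> - v) \<bullet> u > 0" "(vc \<tau> - v) \<bullet> u > 0" using lateral_props assms by auto
  have m: "min_height \<le> (vb \<tau> - v) \<bullet> u" "min_height \<le> (vc \<tau> - v) \<bullet> u" using min_height_le assms by auto
  show "0 < ratio_b \<tau>" "0 < ratio_c \<tau>" using i t_pos by (auto simp: ratio_b_def ratio_c_def)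
  show "ratio_b \<tau> < 1" "ratio_c \<tau> < 1" using i m t_less(2) min_height_pos by (auto simp: ratio_b_def ratio_c_def field_simps)
  show "(cut_b \<tau> - v) \<bullet> u = t" "(cut_c \<tau> - v) \<bullet> u = t" using i by (auto simp: cut_b_def cut_c_def ratio_b_def ratio_c_def)
qed

lemma lateral_coords:
  assumes "\<tau> \<in> lateral" "y \<in> tri_hull \<tau>"
  obtains \<beta> \<gamma> where "0 \<le> \<beta>" "0 \<le> \<gamma>" "\<beta> + \<gamma> \<le> 1"
    "y = v + \<beta> *\<^sub>R (vb \<tau> - v) + \<gamma> *\<^sub>R (vc \<tau> - v)"
proof -
  obtain a b c where abc: "0 \<le> a" "0 \<le> b" "0 \<le> c" "a + b + c = 1"
    and y': "y = a *\<^sub>R v + b *\<^sub>R vb \<tau> + c *\<^sub>R vc \<tau>"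
    using assms lateral_props(1)[OF assms(1)] by (auto simp: convex_hull_3)
  have "y = v + b *\<^sub>R (vb \<tau> - v) + c *\<^sub>R (vc \<tau> - v)"
  proof -
    have "y - v = y - (a + b + c) *\<^sub>R v" using abc(4) by simp
    then have "y - v = b *\<^sub>R (vb \<tau> - v) + c *\<^sub>R (vc \<tau> - v)" by (simp add: y' algebra_simps)
    then show ?thesis by (simp add: algebra_simps)
  qed
  then show ?thesis using that abc by auto
qed

lemma lateral_coords_height:
  assumes "\<tau> \<in> lateral"
  shows "(v + \<beta> *\<^sub>R (vb \<tau> - v) + \<gamma> *\<^sub>R (vc \<tau> - v) - v) \<bullet> u = t * (\<beta> / ratio_b \<tau> + \<gamma> / ratio_c \<tau>)"
proof -
  have i: "(vb \<tau> - v) \<bullet> u > 0" "(vc \<tau> - v) \<bullet> u > 0" using lateral_props assms by auto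
  have "(v + \<beta> *\<^sub>R (vb \<tau> - v) + \<gamma> *\<^sub>R (vc \<tau> - v) - v) \<bullet> u
      = \<beta> * ((vb \<tau> - v) \<bullet> u) + \<gamma> * ((vc \<tau> - v) \<bullet> u)"
    by (simp add: inner_add_left)
  moreover have "t * (\<beta> / ratio_b \<tau> + \<gamma> / ratio_c \<tau>) = \<beta> * ((vb \<tau> - v) \<bullet> u) + \<gamma> * ((vc \<tau> - v) \<bullet> u)"
    using i t_pos by (simp add: ratio_b_def ratio_c_def field_simps)
  ultimately show ?thesis by simp
qed

lemma lateral_coords_in_hull:
  assumes "\<tau> \<in> lateral" "0 \<le> \<beta>" "0 \<le> \<gamma>" "\<beta> + \<gamma> \<le> 1"
  shows "v + \<beta> *\<^sub>R (vb \<tau> - v) + \<gamma> *\<^sub>R (vc \<tau> - v) \<in> tri_hull \<tau>"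
  unfolding lateral_props(1)[OF assms(1)]
  by (rule in_convex_hull_3I[of "1 - \<beta> - \<gamma>" \<beta> \<gamma>]) (use assms in \<open>auto simp: algebra_simps\<close>)

lemma lateral_upper_eq:
  assumes \<tau>: "\<tau> \<in> lateral"
  shows "tri_hull \<tau> \<inter> {y. (y - v) \<bullet> u \<ge> t} =
     convex hull {cut_b \<tau>, vb \<tau>, vc \<tau>} \<union> convex hull {cut_b \<tau>, vc \<tau>, cut_c \<tau>}"
proof (intro set_eqI iffI)
  fix y assume y: "y \<in> tri_hull \<tau> \<inter> {y. (y - v) \<bullet> u \<ge> t}"
  then obtain \<beta> \<gamma> where bg: "0 \<le> \<beta>" "0 \<le> \<gamma>" "\<beta> + \<gamma> \<le> 1"
    and ye: "y = v + \<beta> *\<^sub>R (vb \<tau> - v) + \<gamma> *\<^sub>R (vc \<tau> - v)"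
    using lateral_coords[OF \<tau>] by blast
  have "t * (\<beta> / ratio_b \<tau> + \<gamma> / ratio_c \<tau>) \<ge> t" using y lateral_coords_height[OF \<tau>] ye by simp
  then have ge: "\<beta> / ratio_b \<tau> + \<gamma> / ratio_c \<tau> \<ge> 1" using t_pos by simp
  note S = cut_props[OF \<tau>]
  show "y \<in> convex hull {cut_b \<tau>, vb \<tau>, vc \<tau>} \<union> convex hull {cut_b \<tau>, vc \<tau>, cut_c \<tau>}"
    using upper_part_split[OF S(1-4) bg ge, of v "vb \<tau> - v" "vc \<tau> - v"]
    by (simp add: ye cut_b_def cut_c_def)
next
  fix y assume y: "y \<in> convex hull {cut_b \<tau>, vb \<tau>, vc \<tau>} \<union> convex hull {cut_b \<tau>, vc \<tau>, cut_c \<tau>}"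
  note S = cut_props[OF \<tau>]
  have cv: "convex (tri_hull \<tau> \<inter> {y. (y - v) \<bullet> u \<ge> t})"
  proof -
    have "convex {y. (y - v) \<bullet> u \<ge> t}"
    proof -
      have e: "(y - v) \<bullet> u = u \<bullet> y - u \<bullet> v" for y by (simp add: inner_diff_right inner_commute[of _ u])
      have "{y. (y - v) \<bullet> u \<ge> t} = {y. u \<bullet> y \<ge> t + u \<bullet> v}"
        unfolding e by auto
      then show ?thesis by (simp add: convex_halfspace_ge)
    qed
    then show ?thesis by (simp add: tri_hull_eq convex_Int)
  qed
  have mem: "cut_b \<tau> \<in> tri_hull \<tau>" "vb \<tau> \<in> tri_hull \<tau>" "vc \<tau> \<in> tri_hull \<tau>" "cut_c \<tau> \<in> tri_hull \<tau>"
    using lateral_coords_in_hull[OF \<tau>, of "ratio_b \<tau>" 0] lateral_coords_in_hull[OF \<tau>, of 1 0] lateral_coords_in_hull[OF \<tau>, of 0 1]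
      lateral_coords_in_hull[OF \<tau>, of 0 "ratio_c \<tau>"] S
    by (auto simp: cut_b_def cut_c_def)
  have "(vb \<tau> - v) \<bullet> u \<ge> t" "(vc \<tau> - v) \<bullet> u \<ge> t"
    using min_height_le[OF \<tau>] t_less(2) min_height_pos by auto
  then have s1: "{cut_b \<tau>, vb \<tau>, vc \<tau>} \<subseteq> tri_hull \<tau> \<inter> {y. (y - v) \<bullet> u \<ge> t}"
    and s2: "{cut_b \<tau>, vc \<tau>, cut_c \<tau>} \<subseteq> tri_hull \<tau> \<inter> {y. (y - v) \<bullet> u \<ge> t}"
    using mem S by auto
  have "convex hull {cut_b \<tau>, vb \<tau>, vc \<tau>} \<subseteq> tri_hull \<tau> \<inter> {y. (y - v) \<bullet> u \<ge> t}"
    "convex hull {cut_b \<tau>, vc \<tau>, cut_c \<tau>} \<subseteq> tri_hull \<tau> \<inter> {y. (y - v) \<bullet> u \<ge> t}"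
    by (rule hull_minimal[where S=convex, OF s1 cv], rule hull_minimal[where S=convex, OF s2 cv])
  then show "y \<in> tri_hull \<tau> \<inter> {y. (y - v) \<bullet> u \<ge> t}" using y by blast
qed

lemma lateral_lower_in_tip:
  assumes \<tau>: "\<tau> \<in> lateral" and y: "y \<in> tri_hull \<tau>" "(y - v) \<bullet> u \<le> t"
  shows "y \<in> convex hull {v, cut_b \<tau>, cut_c \<tau>}"
proof -
  obtain \<beta> \<gamma> where bg: "0 \<le> \<beta>" "0 \<le> \<gamma>" "\<beta> + \<gamma> \<le> 1"
    and ye: "y = v + \<beta> *\<^sub>R (vb \<tau> - v) + \<gamma> *\<^sub>R (vc \<tau> - v)"
    using lateral_coords[OF \<tau> y(1)] by blast
  have "t * (\<beta> / ratio_b \<tau> + \<gamma> / ratio_c \<tau>) \<le> t" using y lateral_coords_height[OF \<tau>] ye by simp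
  then have le: "\<beta> / ratio_b \<tau> + \<gamma> / ratio_c \<tau> \<le> 1" using t_pos by simp
  note S = cut_props[OF \<tau>]
  show ?thesis
    using lower_part_in_tip[OF S(1) S(3) bg(1,2) le, of v "vb \<tau> - v" "vc \<tau> - v"]
    by (simp add: ye cut_b_def cut_c_def)
qed

lemma lateral_level_segment:
  assumes \<tau>: "\<tau> \<in> lateral" and y: "y \<in> tri_hull \<tau>" "(y - v) \<bullet> u = t"
  shows "y \<in> closed_segment (cut_b \<tau>) (cut_c \<tau>)"
proof -
  obtain \<beta> \<gamma> where bg: "0 \<le> \<beta>" "0 \<le> \<gamma>" "\<beta> + \<gamma> \<le> 1"
    and ye: "y = v + \<beta> *\<^sub>R (vb \<tau> - v) + \<gamma> *\<^sub>R (vc \<tau> - v)"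
    using lateral_coords[OF \<tau> y(1)] by blast
  have "t * (\<beta> / ratio_b \<tau> + \<gamma> / ratio_c \<tau>) = t" using y lateral_coords_height[OF \<tau>] ye by simp
  then have eq: "\<beta> / ratio_b \<tau> + \<gamma> / ratio_c \<tau> = 1" using t_pos by simp
  note S = cut_props[OF \<tau>]
  show ?thesis
    using level_line_segment[OF S(1) S(3) bg(1,2) eq, of v "vb \<tau> - v" "vc \<tau> - v"]
    by (simp add: ye cut_b_def cut_c_def)
qed

lemma frontier_minus_cap:
  "frontier P - cap = \<Union>(tri_hull ` (T - lateral)) \<union> (\<Union>\<tau>\<in>lateral. tri_hull \<tau> \<inter> {y. (y - v) \<bullet> u \<ge> t})"
proof (intro set_eqI iffI)
  fix x assume x: "x \<in> frontier P - cap"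
  then obtain \<tau> where \<tau>: "\<tau> \<in> T" "x \<in> tri_hull \<tau>" using frontier_eq_Union_T by auto
  show "x \<in> \<Union>(tri_hull ` (T - lateral)) \<union> (\<Union>\<tau>\<in>lateral. tri_hull \<tau> \<inter> {y. (y - v) \<bullet> u \<ge> t})"
  proof (cases "\<tau> \<in> lateral")
    case True
    have "\<not> (x - v) \<bullet> u < t"
    proof
      assume lt: "(x - v) \<bullet> u < t"
      then have "norm (x - v) < near_radius / 2" using lateral_low_small[OF True \<tau>(2)] by simp
      then have "x \<in> ball v r" using near_radius_less_r near_radius_pos by (simp add: dist_norm norm_minus_commute)
      then show False using x lt by (simp add: cap_def)
    qed
    then show ?thesis using True \<tau> by auto
  next
    case False then show ?thesis using \<tau> by auto
  qed
next
  fix x assume x: "x \<in> \<Union>(tri_hull ` (T - lateral)) \<union> (\<Union>\<tau>\<in>lateral. tri_hull \<tau> \<inter> {y. (y - v) \<bullet> u \<ge> t})"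
  have "\<exists>\<tau>\<in>T. x \<in> tri_hull \<tau> \<and> (\<tau> \<in> lateral \<longrightarrow> t \<le> (x - v) \<bullet> u)"
    using x unfolding lateral_def by blast
  then obtain \<tau> where \<tau>: "\<tau> \<in> T" "x \<in> tri_hull \<tau>" "\<tau> \<in> lateral \<Longrightarrow> t \<le> (x - v) \<bullet> u" by blast
  have xf: "x \<in> frontier P" using \<tau> frontier_eq_Union_T by auto
  have "x \<notin> cap"
  proof
    assume xU: "x \<in> cap"
    show False
    proof (cases "\<tau> \<in> lateral")
      case True
      then have "(x - v) \<bullet> u \<ge> t" using \<tau>(3) by blast
      then show False using xU by (simp add: cap_def)
    next
      case False
      have "norm (x - v) < cone_const * t" using cap_norm_bound xU xf frontier_subset_P by blast
      then have "norm (x - v) < lateral_gap" using cone_const_t near_radius_pos by (simp add: near_radius_def)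
      then show False using nonlateral_far[OF \<tau>(1) False \<tau>(2)] by simp
    qed
  qed
  then show "x \<in> frontier P - cap" using xf by simp
qed

end

lemma rel_interior_triangle_weights:
  fixes a b c v G y :: pt3
  assumes nc: "\<not> collinear {a,b,c}" and y: "y \<in> rel_interior (convex hull {a,b,c})"
  shows "\<exists>wa wb wc. 0 < wa \<and> 0 < wb \<and> 0 < wc \<and> wa + wb + wc = 1 \<and>
     (y - v) \<bullet> G = wa * ((a - v) \<bullet> G) + wb * ((b - v) \<bullet> G) + wc * ((c - v) \<bullet> G)"
proof -
  have d: "a \<noteq> b" "a \<noteq> c" "b \<noteq> c" using nc by (auto simp: collinear_2 insert_commute)
  have ind: "\<not> affine_dependent {a,b,c}" using nc affine_dependent_imp_collinear_3 by blast
  obtain w where w: "\<forall>x\<in>{a,b,c}. 0 < w x" "sum w {a,b,c} = 1" "(\<Sum>x\<in>{a,b,c}. w x *\<^sub>R x) = y"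
    using y rel_interior_convex_hull_explicit[OF ind] by blast
  have s1: "w a + w b + w c = 1" using w(2) d by simp
  have ye: "y = w a *\<^sub>R a + w b *\<^sub>R b + w c *\<^sub>R c" using w(3) d by (simp add: add.assoc)
  have "y - v = w a *\<^sub>R (a - v) + w b *\<^sub>R (b - v) + w c *\<^sub>R (c - v)"
  proof -
    have "y - v = y - (w a + w b + w c) *\<^sub>R v" using s1 by simp
    then show ?thesis by (simp add: ye algebra_simps)
  qed
  then have "(y - v) \<bullet> G = w a * ((a - v) \<bullet> G) + w b * ((b - v) \<bullet> G) + w c * ((c - v) \<bullet> G)"
    by (simp add: inner_add_left)
  then show ?thesis using w(1) s1 by (intro exI[of _ "w a"] exI[of _ "w b"] exI[of _ "w c"]) auto
qed

lemma rel_interior_tri_hull_nonempty: "tri_nondeg t \<Longrightarrow> rel_interior (tri_hull t) \<noteq> {}"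
  by (cases t) (auto simp: tri_hull_def rel_interior_eq_empty)

abbreviation relint_tri :: "pt3 \<times> pt3 \<times> pt3 \<Rightarrow> pt3 set" where
  "relint_tri t \<equiv> rel_interior (tri_hull t)"

lemma proper_triangles_subset: "proper_triangles A \<Longrightarrow> B \<subseteq> A \<Longrightarrow> proper_triangles B"
  using finite_subset unfolding proper_triangles_def by blast

lemma proper_triangles_Un:
  assumes A: "proper_triangles A" and B: "proper_triangles B"
    and AB: "\<And>a b. a \<in> A \<Longrightarrow> b \<in> B \<Longrightarrow> relint_tri a \<inter> relint_tri b = {}"
  shows "proper_triangles (A \<union> B)" "A \<inter> B = {}"
proof -
  show "A \<inter> B = {}"
    using AB A rel_interior_tri_hull_nonempty by (fastforce simp: proper_triangles_def)
  show "proper_triangles (A \<union> B)"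
    using A B AB unfolding proper_triangles_def by (metis Int_commute Un_iff finite_UnI)
qed

lemma proper_triangles_image:
  assumes "finite I" "\<And>i. i \<in> I \<Longrightarrow> tri_nondeg (f i)"
    and disj: "\<And>i j. i \<in> I \<Longrightarrow> j \<in> I \<Longrightarrow> i \<noteq> j \<Longrightarrow> relint_tri (f i) \<inter> relint_tri (f j) = {}"
  shows "proper_triangles (f ` I)" "inj_on f I"
proof -
  show inj: "inj_on f I"
  proof (rule inj_onI, rule ccontr)
    fix i j assume "i \<in> I" "j \<in> I" "f i = f j" "i \<noteq> j"
    then show False using disj[of i j] assms(2) rel_interior_tri_hull_nonempty by auto
  qed
  show "proper_triangles (f ` I)"
    using assms by (auto simp: proper_triangles_def)
qed

lemma tri_nondeg_normal: "tri_normal t \<noteq> 0 \<Longrightarrow> tri_nondeg t"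
proof (cases t)
  case (fields a b c)
  assume "tri_normal t \<noteq> 0"
  then have "\<not> collinear {0, b - a, c - a}" by (simp add: fields tri_normal_def cross_eq_0)
  then have "\<not> collinear {b, a, c}" by (simp add: collinear_3)
  then show ?thesis by (simp add: fields tri_nondeg_def insert_commute)
qed

lemma midpoint_in_open_segment:
  fixes x w :: "'a::real_normed_vector"
  assumes "d \<noteq> 0" "w \<noteq> 0"
  shows "x \<in> open_segment (x - d *\<^sub>R w) (x + d *\<^sub>R w)"
proof -
  have "x - d *\<^sub>R w \<noteq> x + d *\<^sub>R w"
  proof
    assume "x - d *\<^sub>R w = x + d *\<^sub>R w"
    then have "d *\<^sub>R w + d *\<^sub>R w = 0" by (simp add: algebra_simps)
    then have "(2 * d) *\<^sub>R w = 0" by (metis mult_2 scaleR_add_left)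
    then show False using assms by simp
  qed
  moreover have "x = (1 - 1/2) *\<^sub>R (x - d *\<^sub>R w) + (1/2) *\<^sub>R (x + d *\<^sub>R w)"
  proof -
    have "(1/2::real) + 1/2 = 1" by simp
    then have "(1/2) *\<^sub>R x + (1/2) *\<^sub>R x = x" by (metis scaleR_add_left scaleR_one)
    then show ?thesis by (simp add: algebra_simps)
  qed
  ultimately show ?thesis unfolding in_segment by (intro conjI exI[of _ "1/2"]) auto
qed

lemma convex_Int_ball_not_covered:
  fixes H :: "'a::euclidean_space set"
  assumes "finite L" "\<And>S. S \<in> L \<Longrightarrow> closed S \<and> aff_dim S < aff_dim H"
    and "convex H" "x \<in> H" "e > 0"
  shows "\<not> H \<inter> ball x e \<subseteq> \<Union>L"
  using assms
proof (induction L arbitrary: x e rule: finite_induct)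
  case empty
  then show ?case by auto
next
  case (insert S L)
  have "x \<in> H \<inter> ball x e" using insert.prems by simp
  then have "aff_dim (H \<inter> ball x e) = aff_dim H"
    using aff_dim_convex_Int_open[of H "ball x e"] insert.prems by blast
  then have "\<not> H \<inter> ball x e \<subseteq> S"
    using aff_dim_subset[of "H \<inter> ball x e" S] insert.prems by force
  then obtain y where y: "y \<in> H" "y \<in> ball x e" "y \<notin> S" by blast
  have "open (- S)" using insert.prems by auto
  then obtain e1 where e1: "e1 > 0" "ball y e1 \<subseteq> - S" using y(3) open_contains_ball by blast
  define e' where "e' = min e1 (e - dist x y)"
  have e': "e' > 0" "ball y e' \<subseteq> ball x e \<inter> - S"
  proof -
    show "e' > 0" using e1 y(2) by (simp add: e'_def)
    have "z \<in> ball x e" if "z \<in> ball y e'" for z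
      using that dist_triangle[of x z y] by (simp add: e'_def)
    then show "ball y e' \<subseteq> ball x e \<inter> - S" using e1 by (auto simp: e'_def)
  qed
  have "\<not> H \<inter> ball y e' \<subseteq> \<Union>L" using insert.IH[of y e'] insert.prems y(1) e'(1) by auto
  then show ?case using e' by blast
qed

text \<open>Cells of lower dimension cannot cover a relatively open ball around a relative interior
  point of the convex set.\<close>
lemma convex_eq_Union_full_dim_cells:
  fixes S :: "'a::euclidean_space set"
  assumes fin: "finite \<C>" and cl: "\<And>X. X \<in> \<C> \<Longrightarrow> closed X" and S: "\<Union>\<C> = S" "convex S"
  shows "\<Union>{X\<in>\<C>. aff_dim X = aff_dim S} = S"
proof
  show "\<Union>{X\<in>\<C>. aff_dim X = aff_dim S} \<subseteq> S" using S(1) by blast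
  show "S \<subseteq> \<Union>{X\<in>\<C>. aff_dim X = aff_dim S}"
  proof
    fix x assume xS: "x \<in> S"
    show "x \<in> \<Union>{X\<in>\<C>. aff_dim X = aff_dim S}"
    proof (rule ccontr)
      assume nx: "x \<notin> \<Union>{X\<in>\<C>. aff_dim X = aff_dim S}"
      have "closed (\<Union>{X\<in>\<C>. aff_dim X = aff_dim S})" using fin cl by auto
      then have "open (- \<Union>{X\<in>\<C>. aff_dim X = aff_dim S})" by (rule open_Compl)
      then obtain e where e: "e > 0" "ball x e \<subseteq> - \<Union>{X\<in>\<C>. aff_dim X = aff_dim S}"
        using nx open_contains_ball by blast
      have "x \<in> closure (rel_interior S)" using xS S(2) closure_subset convex_closure_rel_interior by blast
      then have "\<exists>y\<in>rel_interior S. dist y x < e / 2" using e(1) unfolding closure_approachable by (meson half_gt_zero)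
      then obtain y where y: "y \<in> rel_interior S" "dist y x < e / 2" by blast
      obtain e1 where e1: "e1 > 0" "ball y e1 \<inter> affine hull S \<subseteq> S"
        using y(1) mem_rel_interior_ball by blast
      define e2 where "e2 = min e1 (e / 2)"
      have "affine hull S \<inter> ball y e2 \<subseteq> \<Union>{X\<in>\<C>. aff_dim X < aff_dim S}"
      proof
        fix z assume z: "z \<in> affine hull S \<inter> ball y e2"
        then have zS: "z \<in> S" using e1 by (auto simp: e2_def)
        have "dist x z < e" using z y(2) dist_triangle[of x z y] by (auto simp: e2_def dist_commute)
        then have nz: "z \<notin> \<Union>{X\<in>\<C>. aff_dim X = aff_dim S}" using e(2) by (auto simp: dist_commute)
        obtain X where X: "X \<in> \<C>" "z \<in> X" using zS S(1) by blast
        have "aff_dim X \<le> aff_dim S" using X(1) S(1) by (intro aff_dim_subset) blast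
        moreover have "aff_dim X \<noteq> aff_dim S" using X nz by blast
        ultimately show "z \<in> \<Union>{X\<in>\<C>. aff_dim X < aff_dim S}" using X by auto
      qed
      moreover have "\<not> affine hull S \<inter> ball y e2 \<subseteq> \<Union>{X\<in>\<C>. aff_dim X < aff_dim S}"
        using fin cl e1(1) e(1) rel_interior_subset[of S] hull_subset[of S affine] y(1)
        by (intro convex_Int_ball_not_covered) (auto simp: e2_def convex_affine_hull)
      ultimately show False by blast
    qed
  qed
qed

lemma two_simplex_eq_tri_hull:
  assumes "2 simplex X" obtains t where "tri_hull t = X" "tri_nondeg t"
proof -
  obtain C where C: "\<not> affine_dependent C" "int (card C) = 3" "X = convex hull C"
    using assms unfolding simplex by auto
  then obtain a b c where abc: "C = {a,b,c}" "a \<noteq> b" "b \<noteq> c" "a \<noteq> c"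
    using card_3_iff[of C] by auto
  have "\<not> collinear {a,b,c}" using C(1) abc collinear_3_eq_affine_dependent by auto
  then show ?thesis using C(3) abc that[of "(a,b,c)"] by (auto simp: tri_hull_def tri_nondeg_def)
qed

lemma proper_triangles_of_2_simplices:
  assumes fin: "finite \<K>" and simp: "\<And>X. X \<in> \<K> \<Longrightarrow> 2 simplex X"
    and face: "\<And>X Y. X \<in> \<K> \<Longrightarrow> Y \<in> \<K> \<Longrightarrow> (X \<inter> Y) face_of X"
  obtains TB where "proper_triangles TB" "tri_hull ` TB = \<K>"
proof -
  define tri where "tri X = (SOME t. tri_hull t = X \<and> tri_nondeg t)" for X
  have tri: "tri_hull (tri X) = X" "tri_nondeg (tri X)" if "X \<in> \<K>" for X
    using someI_ex[of "\<lambda>t. tri_hull t = X \<and> tri_nondeg t"] two_simplex_eq_tri_hull[OF simp[OF that]]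
    unfolding tri_def by blast+
  have "proper_triangles (tri ` \<K>)"
    unfolding proper_triangles_def
  proof (intro conjI ballI impI)
    show "finite (tri ` \<K>)" using fin by simp
    show "tri_nondeg t" if "t \<in> tri ` \<K>" for t using that tri by auto
    fix t1 t2 assume t: "t1 \<in> tri ` \<K>" "t2 \<in> tri ` \<K>" "t1 \<noteq> t2"
    then obtain X Y where XY: "X \<in> \<K>" "Y \<in> \<K>" "t1 = tri X" "t2 = tri Y" "X \<noteq> Y" by auto
    show "rel_interior (tri_hull t1) \<inter> rel_interior (tri_hull t2) = {}"
    proof (rule ccontr)
      assume "rel_interior (tri_hull t1) \<inter> rel_interior (tri_hull t2) \<noteq> {}"
      then obtain z where z: "z \<in> rel_interior X" "z \<in> rel_interior Y" using tri XY by auto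
      have "X \<inter> Y = X" using face_of_disjoint_rel_interior[OF face[OF XY(1,2)]] z rel_interior_subset by blast
      moreover have "Y \<inter> X = Y" using face_of_disjoint_rel_interior[OF face[OF XY(2,1)]] z rel_interior_subset by blast
      ultimately show False using XY(5) by blast
    qed
  qed
  moreover have "tri_hull ` tri ` \<K> = \<K>" using tri by (force simp: image_image)
  ultimately show ?thesis using that by blast
qed

context truncation
begin

definition cut_plane where "cut_plane = {x. (x - v) \<bullet> u = t}"

lemma base_eq: "base = (P \<inter> cball v r) \<inter> cut_plane"
proof (intro set_eqI iffI)
  fix x assume "x \<in> base" then show "x \<in> (P \<inter> cball v r) \<inter> cut_plane" by (auto simp: base_def cut_plane_def)
next
  fix x assume x: "x \<in> (P \<inter> cball v r) \<inter> cut_plane"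
  then have "norm (x - v) < near_radius" using height_threshold(2)[of x] t_less(1) by (auto simp: cut_plane_def)
  then show "x \<in> base" using x near_radius_less_r by (auto simp: base_def cut_plane_def dist_norm norm_minus_commute)
qed

lemma convex_cut_plane: "convex cut_plane"
proof -
  have e: "(y - v) \<bullet> u = u \<bullet> y - u \<bullet> v" for y by (simp add: inner_diff_right inner_commute[of _ u])
  have "cut_plane = {x. u \<bullet> x = t + u \<bullet> v}" unfolding cut_plane_def e by auto
  then show ?thesis by (simp add: convex_hyperplane)
qed

lemma cut_plane_eq: "cut_plane = {x. u \<bullet> x = t + u \<bullet> v}"
proof -
  have e: "(y - v) \<bullet> u = u \<bullet> y - u \<bullet> v" for y by (simp add: inner_diff_right inner_commute[of _ u])
  show ?thesis unfolding cut_plane_def e by auto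
qed

lemma aff_dim_cut_plane: "aff_dim cut_plane = 2"
proof -
  have "u \<noteq> 0" using u1 by auto
  then show ?thesis unfolding cut_plane_eq by simp
qed

lemma closed_cut_plane: "closed cut_plane" unfolding cut_plane_eq by (simp add: closed_hyperplane)

lemma convex_base: "convex base" unfolding base_eq using cvx convex_cut_plane by (simp add: convex_Int)

lemma compact_base: "compact base"
  unfolding base_eq by (intro compact_Int_closed compP closed_cball closed_cut_plane)

lemma base_small: "x \<in> base \<Longrightarrow> norm (x - v) < near_radius / 2"
proof -
  assume x: "x \<in> base"
  then have xK: "x \<in> P \<inter> cball v r" by (auto simp: base_eq)
  have xP: "x \<in> P" and it: "(x - v) \<bullet> u = t" using x by (auto simp: base_def)
  have n: "norm (x - v) < near_radius" using height_threshold(2)[OF xK] it t_less(1) by simp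
  have "norm (x - v) \<le> cone_const * ((x - v) \<bullet> u)" by (rule norm_le_cone_const[OF xP n])
  then have "norm (x - v) \<le> cone_const * t" using it by simp
  then show ?thesis using cone_const_t by simp
qed

definition proj_cut where "proj_cut y = y + (t - (y - v) \<bullet> u) *\<^sub>R u"

lemma base_covered: "x \<in> base \<Longrightarrow> \<exists>\<tau>\<in>lateral. x \<in> proj_cut ` (convex hull {v, cut_b \<tau>, cut_c \<tau>})"
proof -
  assume x: "x \<in> base"
  have n: "norm (x - v) < near_radius" using base_small[OF x] near_radius_pos by simp
  obtain s \<tau> where s: "0 \<le> s" "s \<le> (x - v) \<bullet> u" and \<tau>: "\<tau> \<in> lateral" "x - s *\<^sub>R u \<in> tri_hull \<tau>"
    using descend_to_lateral[OF _ n] x by (auto simp: base_def)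
  have i: "(x - s *\<^sub>R u - v) \<bullet> u = t - s" using x u_inner_self by (simp add: base_def inner_diff_left)
  then have "x - s *\<^sub>R u \<in> convex hull {v, cut_b \<tau>, cut_c \<tau>}" using lateral_lower_in_tip[OF \<tau>] s by simp
  moreover have "proj_cut (x - s *\<^sub>R u) = x" using i by (simp add: proj_cut_def)
  ultimately show ?thesis using \<tau>(1) by (metis image_eqI)
qed

lemma cut_b_in_base: "\<tau> \<in> lateral \<Longrightarrow> cut_b \<tau> \<in> base" and cut_c_in_base: "\<tau> \<in> lateral \<Longrightarrow> cut_c \<tau> \<in> base"
proof -
  assume \<tau>: "\<tau> \<in> lateral"
  note S = cut_props[OF \<tau>]
  have mem: "cut_b \<tau> \<in> tri_hull \<tau>" "cut_c \<tau> \<in> tri_hull \<tau>"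
    using lateral_coords_in_hull[OF \<tau>, of "ratio_b \<tau>" 0] lateral_coords_in_hull[OF \<tau>, of 0 "ratio_c \<tau>"] S
    by (auto simp: cut_b_def cut_c_def)
  have P: "tri_hull \<tau> \<subseteq> P" using \<tau> tri_hull_subset_P by (auto simp: lateral_def)
  have "norm (cut_b \<tau> - v) < near_radius / 2" "norm (cut_c \<tau> - v) < near_radius / 2"
    using lateral_low_small[OF \<tau>] mem S by auto
  then show "cut_b \<tau> \<in> base" "cut_c \<tau> \<in> base"
    using mem P S near_radius_less_r near_radius_pos by (auto simp: base_def dist_norm norm_minus_commute)
qed

definition base_corners where "base_corners = (\<Union>\<tau>\<in>lateral. {cut_b \<tau>, cut_c \<tau>})"

lemma perpendicular_exists: "\<exists>w. w \<noteq> 0 \<and> w \<bullet> u = 0"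
proof -
  obtain e1 e2 where o: "orthonormal2 e1 e2" and c: "e1 \<times> e2 = u" using orthonormal2_with_cross u_inner_self by blast
  have "e1 \<noteq> 0" using o by (auto simp: orthonormal2_def)
  moreover have "e1 \<bullet> u = 0" using c by (metis dot_cross_self(1))
  ultimately show ?thesis by blast
qed

lemma extreme_point_base: "x extreme_point_of base \<Longrightarrow> x \<in> base_corners"
proof -
  assume ex: "x extreme_point_of base"
  then have xB: "x \<in> base" by (simp add: extreme_point_of_def)
  have xs: "norm (x - v) < near_radius / 2" using base_small[OF xB] .
  have "x \<notin> interior P"
  proof
    assume "x \<in> interior P"
    then obtain e where e: "e > 0" "ball x e \<subseteq> P"
      by (meson open_contains_ball open_interior interior_subset subset_trans)
    obtain w where w: "w \<noteq> 0" "w \<bullet> u = 0" using perpendicular_exists by blast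
    define d where "d = min (e / 2) (near_radius / 4) / norm w"
    have d: "d > 0" "d * norm w < e" "d * norm w \<le> near_radius / 4"
      using e w near_radius_pos by (auto simp: d_def)
    have mem: "x + c *\<^sub>R (d *\<^sub>R w) \<in> base" if "\<bar>c\<bar> \<le> 1" for c
    proof -
      have nn: "norm (c *\<^sub>R (d *\<^sub>R w)) \<le> d * norm w"
        using that d by (simp add: mult_left_le_one_le mult.assoc[symmetric] abs_mult mult_le_cancel_right1)
      then have "x + c *\<^sub>R (d *\<^sub>R w) \<in> ball x e" using d by (simp add: dist_norm)
      then have inP: "x + c *\<^sub>R (d *\<^sub>R w) \<in> P" using e by blast
      have "norm (x + c *\<^sub>R (d *\<^sub>R w) - v) \<le> norm (x - v) + norm (c *\<^sub>R (d *\<^sub>R w))"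
        by (metis add.commute add_diff_eq norm_triangle_ineq diff_add_eq)
      then have "norm (x + c *\<^sub>R (d *\<^sub>R w) - v) < r" using xs nn d near_radius_less_r near_radius_pos by linarith
      moreover have "(x + c *\<^sub>R (d *\<^sub>R w) - v) \<bullet> u = t"
        using xB w by (simp add: base_def inner_add_left inner_diff_left)
      ultimately show ?thesis using inP by (auto simp: base_def dist_norm norm_minus_commute)
    qed
    have "x \<in> open_segment (x - d *\<^sub>R w) (x + d *\<^sub>R w)"
      using d w by (intro midpoint_in_open_segment) auto
    moreover have "x - d *\<^sub>R w \<in> base" using mem[of "-1"] by simp
    moreover have "x + d *\<^sub>R w \<in> base" using mem[of 1] by simp
    ultimately show False using ex by (auto simp: extreme_point_of_def)
  qed
  then have "x \<in> frontier P" using xB closed_P by (simp add: base_def frontier_def closure_closed)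
  moreover have "norm (x - v) < lateral_gap" using xs near_radius_pos by (simp add: near_radius_def)
  ultimately obtain \<tau> where \<tau>: "\<tau> \<in> lateral" "x \<in> tri_hull \<tau>" using frontier_near_v_lateral by blast
  then have seg: "x \<in> closed_segment (cut_b \<tau>) (cut_c \<tau>)" using lateral_level_segment xB by (simp add: base_def)
  show "x \<in> base_corners"
  proof (rule ccontr)
    assume "x \<notin> base_corners"
    then have "x \<in> open_segment (cut_b \<tau>) (cut_c \<tau>)" using seg \<tau> by (auto simp: base_corners_def open_segment_def)
    then show False using ex cut_b_in_base[OF \<tau>(1)] cut_c_in_base[OF \<tau>(1)] by (auto simp: extreme_point_of_def)
  qed
qed

lemma base_eq_hull: "base = convex hull base_corners"
proof
  have "base = convex hull {x. x extreme_point_of base}"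
    by (rule Krein_Milman_Minkowski[OF compact_base convex_base])
  also have "\<dots> \<subseteq> convex hull base_corners" using extreme_point_base by (intro hull_mono) auto
  finally show "base \<subseteq> convex hull base_corners" .
  show "convex hull base_corners \<subseteq> base"
    using cut_b_in_base cut_c_in_base convex_base by (intro hull_minimal) (auto simp: base_corners_def)
qed

lemma finite_base_corners: "finite base_corners" using finite_lateral by (simp add: base_corners_def)

lemma polytope_base: "polytope base" unfolding polytope_def using base_eq_hull finite_base_corners by blast

definition local_part where "local_part = P \<inter> cball v r"

lemma cut_plane_meets_interior: "\<exists>w. w \<in> interior local_part \<and> w \<in> cut_plane"
proof -
  define sp where "sp = (int_pt - v) \<bullet> u"
  have sp: "sp > 0" "t < sp" using int_pt_height_pos t_less(4) by (auto simp: sp_def)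
  have ppK: "int_pt \<in> interior local_part"
    using int_pt near_radius_less_r by (simp add: local_part_def dist_norm norm_minus_commute)
  have vK: "v \<in> closure local_part" using vP rpos closure_subset by (force simp: local_part_def)
  have int_pt_ne_v: "int_pt \<noteq> v" using int_pt(1) v_in_frontier by (auto simp: frontier_def)
  define w where "w = (1 - (1 - t / sp)) *\<^sub>R int_pt + (1 - t / sp) *\<^sub>R v"
  have "w \<in> open_segment int_pt v"
    unfolding in_segment using sp int_pt_ne_v t_pos by (intro conjI exI[of _ "1 - t / sp"]) (auto simp: w_def field_simps)
  then have "w \<in> interior local_part"
    using in_interior_closure_convex_segment[OF _ ppK vK] cvx by (auto simp: local_part_def)
  moreover have "w - v = (t / sp) *\<^sub>R (int_pt - v)" by (simp add: w_def algebra_simps)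
  then have "(w - v) \<bullet> u = t" using sp by (simp add: sp_def)
  ultimately show ?thesis by (auto simp: cut_plane_def)
qed

lemma base_eq_local_part: "base = local_part \<inter> cut_plane" by (simp add: base_eq local_part_def)

lemma aff_dim_base: "aff_dim base = 2"
proof -
  obtain w where w: "w \<in> interior local_part" "w \<in> cut_plane" using cut_plane_meets_interior by blast
  have "aff_dim (cut_plane \<inter> interior local_part) = 2"
    using w aff_dim_convex_Int_open[OF convex_cut_plane, of "interior local_part"] aff_dim_cut_plane by auto
  moreover have "cut_plane \<inter> interior local_part \<subseteq> base"
    using interior_subset base_eq_local_part by blast
  moreover have "base \<subseteq> cut_plane" by (simp add: base_eq_local_part)
  ultimately show ?thesis
    using aff_dim_subset[of "cut_plane \<inter> interior local_part" base] aff_dim_subset[of base cut_plane]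
      aff_dim_cut_plane by linarith
qed

lemma base_triangulation:
  obtains TB where "proper_triangles TB" "\<Union>(tri_hull ` TB) = base"
    "\<And>t. t \<in> TB \<Longrightarrow> tri_verts t \<subseteq> cut_plane"
proof -
  obtain \<T> where sc: "simplicial_complex \<T>" and "\<Union>\<T> = \<Union>{base}"
    using simplicial_subdivision_of_cell_complex[of "{base}"] polytope_base convex_base face_of_refl
    by (metis Int_absorb finite.emptyI finite.insertI singletonD)
  then have un: "\<Union>\<T> = base" by simp
  have fin: "finite \<T>" and simp: "\<And>X. X \<in> \<T> \<Longrightarrow> \<exists>n. n simplex X"
    and face: "\<And>X Y. X \<in> \<T> \<Longrightarrow> Y \<in> \<T> \<Longrightarrow> (X \<inter> Y) face_of X"
    using sc by (auto simp: simplicial_complex_def)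
  define \<K> where "\<K> = {X\<in>\<T>. aff_dim X = 2}"
  have "\<Union>\<K> = base"
    using convex_eq_Union_full_dim_cells[OF fin _ un convex_base] simp closed_simplex aff_dim_base
    by (auto simp: \<K>_def)
  obtain TB where TB: "proper_triangles TB" "tri_hull ` TB = \<K>"
  proof (rule proper_triangles_of_2_simplices)
    show "finite \<K>" using fin by (simp add: \<K>_def)
    show "2 simplex X" if "X \<in> \<K>" for X
      using that simp aff_dim_simplex by (force simp: \<K>_def)
    show "(X \<inter> Y) face_of X" if "X \<in> \<K>" "Y \<in> \<K>" for X Y
      using that face by (simp add: \<K>_def)
  qed (rule that)
  have "tri_verts t \<subseteq> cut_plane" if "t \<in> TB" for t
    using that TB(2) \<open>\<Union>\<K> = base\<close> hull_subset[of "tri_verts t" convex] tri_hull_eq[of t] base_eq_local_part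
    by blast
  then show ?thesis using that TB \<open>\<Union>\<K> = base\<close> by blast
qed

end

lemma triangle_area_normal: "triangle_area t = norm (tri_normal t) / 2"
  by (cases t) (simp add: triangle_area_def tri_normal_def tri_area_def)

lemma cross_orth_proj:
  fixes a b u :: pt3
  assumes u_inner_self: "u \<bullet> u = 1"
  shows "(a - (a \<bullet> u) *\<^sub>R u) \<times> (b - (b \<bullet> u) *\<^sub>R u) = ((a \<times> b) \<bullet> u) *\<^sub>R u"
proof -
  have l1: "u \<times> (u \<times> (a \<times> b)) = (u \<bullet> (a \<times> b)) *\<^sub>R u - (a \<times> b)"
    using Lagrange[of u u "a \<times> b"] u_inner_self by simp
  have l2: "u \<times> (a \<times> b) = (u \<bullet> b) *\<^sub>R a - (u \<bullet> a) *\<^sub>R b" by (rule Lagrange)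
  have l3: "u \<times> (u \<times> (a \<times> b)) = (u \<bullet> b) *\<^sub>R (u \<times> a) - (u \<bullet> a) *\<^sub>R (u \<times> b)"
    by (simp add: l2 Cross3.right_diff_distrib cross_mult_right)
  have sk: "a \<times> u = - (u \<times> a)" by (rule cross_skew)
  have "(a - (a \<bullet> u) *\<^sub>R u) \<times> (b - (b \<bullet> u) *\<^sub>R u)
      = a \<times> b - (b \<bullet> u) *\<^sub>R (a \<times> u) - (a \<bullet> u) *\<^sub>R (u \<times> b)"
    by (simp add: Cross3.left_diff_distrib Cross3.right_diff_distrib cross_mult_left cross_mult_right)
  also have "\<dots> = a \<times> b + u \<times> (u \<times> (a \<times> b))"
    by (simp add: l3 sk inner_commute algebra_simps)
  also have "\<dots> = ((a \<times> b) \<bullet> u) *\<^sub>R u" by (simp add: l1 inner_commute)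
  finally show ?thesis .
qed

lemma abs_inner_less_norm:
  fixes N u a :: "'a::real_inner"
  assumes "norm u = 1" "N \<noteq> 0" "a \<bullet> N = 0" "a \<bullet> u \<noteq> 0"
  shows "\<bar>N \<bullet> u\<bar> < norm N"
proof -
  have "\<bar>N \<bullet> u\<bar> \<noteq> norm N * norm u"
  proof
    assume "\<bar>N \<bullet> u\<bar> = norm N * norm u"
    then have "norm N *\<^sub>R u = N \<or> norm N *\<^sub>R u = - N"
      using norm_cauchy_schwarz_abs_eq[of N u] assms(1) by simp
    then have "norm N * (a \<bullet> u) = 0" using assms(3) by (auto simp flip: inner_scaleR_right)
    then show False using assms(2,4) by simp
  qed
  then show ?thesis using Cauchy_Schwarz_ineq2[of N u] assms(1) by simp
qed

lemma volume_pos: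
  assumes "compact P" "interior P \<noteq> {}" shows "volume P > 0"
proof -
  obtain p e where e: "e > 0" "ball p e \<subseteq> P"
    using assms(2) by (meson ex_in_conv open_contains_ball open_interior interior_subset subset_trans)
  have "measure lebesgue (ball p e) = measure lborel (ball p e)" by (intro measure_completion) simp
  also have "\<dots> > 0" by (rule content_ball_pos[OF e(1)])
  finally have "measure lebesgue (ball p e) > 0" .
  moreover have "measure lebesgue (ball p e) \<le> volume P"
    using assms(1) e(2) unfolding volume_def
    by (intro measure_mono_fmeasurable) (auto simp: lmeasurable_compact fmeasurableD)
  ultimately show ?thesis by linarith
qed

context convex_vertex
begin

definition lat_normal where "lat_normal \<tau> = (vb \<tau> - v) \<times> (vc \<tau> - v)"

lemma lat_normal_nonzero: "\<tau> \<in> lateral \<Longrightarrow> lat_normal \<tau> \<noteq> 0"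
  using lateral_props(3)[of \<tau>] tri_normal_nonzero[of "(v, vb \<tau>, vc \<tau>)"]
  by (simp add: lat_normal_def tri_normal_def tri_nondeg_def)

text \<open>Cutting at height t removes from each lateral face a tip of area proportional to |N|
  and adds base area at most that of the tip projected onto the cutting plane, proportional
  to |N \<bullet> u|, with the same factor t^2 / (((B - v) \<bullet> u) ((C - v) \<bullet> u)).\<close>
definition area_gain where
  "area_gain = (\<Sum>\<tau>\<in>lateral. (norm (lat_normal \<tau>) - \<bar>lat_normal \<tau> \<bullet> u\<bar>)
                             / (2 * (((vb \<tau> - v) \<bullet> u) * ((vc \<tau> - v) \<bullet> u))))"

lemma area_gain_pos: "area_gain > 0"
  unfolding area_gain_def
proof (rule sum_pos[OF finite_lateral lateral_nonempty])
  fix \<tau> assume \<tau>: "\<tau> \<in> lateral"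
  have ib: "(vb \<tau> - v) \<bullet> u > 0" "(vc \<tau> - v) \<bullet> u > 0" using lateral_props[OF \<tau>] by auto
  have "\<bar>lat_normal \<tau> \<bullet> u\<bar> < norm (lat_normal \<tau>)"
    using u1 lat_normal_nonzero[OF \<tau>] ib
    by (intro abs_inner_less_norm[where a = "vb \<tau> - v"]) (auto simp: lat_normal_def dot_cross_self)
  then show "0 < (norm (lat_normal \<tau>) - \<bar>lat_normal \<tau> \<bullet> u\<bar>) / (2 * (((vb \<tau> - v) \<bullet> u) * ((vc \<tau> - v) \<bullet> u)))"
    using ib by simp
qed

definition vol_loss where "vol_loss = cone_const ^ 3 * measure lebesgue (ball (0::pt3) 1)"

lemma vol_loss_nonneg: "vol_loss \<ge> 0" using cone_const_ge1 by (simp add: vol_loss_def)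

end

context truncation
begin

text \<open>The part of a lateral face above the cutting plane is the quadrilateral
  cut_b, vb, vc, cut_c, split along its diagonal from cut_b to vc.\<close>
definition upper1 where "upper1 \<tau> = (cut_b \<tau>, vb \<tau>, vc \<tau>)"
definition upper2 where "upper2 \<tau> = (cut_b \<tau>, vc \<tau>, cut_c \<tau>)"
definition tip where "tip \<tau> = (v, cut_b \<tau>, cut_c \<tau>)"
lemma tri_normal_pieces:
  "tri_normal (upper1 \<tau>) = (1 - ratio_b \<tau>) *\<^sub>R lat_normal \<tau>"
  "tri_normal (upper2 \<tau>) = (ratio_b \<tau> * (1 - ratio_c \<tau>)) *\<^sub>R lat_normal \<tau>"
  "tri_normal (tip \<tau>) = (ratio_b \<tau> * ratio_c \<tau>) *\<^sub>R lat_normal \<tau>"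
proof -
  define B where "B = vb \<tau> - v"
  define C where "C = vc \<tau> - v"
  have sk: "C \<times> B = - (B \<times> C)" by (rule cross_skew)
  have e1: "vb \<tau> - cut_b \<tau> = (1 - ratio_b \<tau>) *\<^sub>R B" by (simp add: cut_b_def B_def algebra_simps)
  have e2: "vc \<tau> - cut_b \<tau> = C - ratio_b \<tau> *\<^sub>R B" by (simp add: cut_b_def B_def C_def algebra_simps)
  have e3: "cut_c \<tau> - cut_b \<tau> = ratio_c \<tau> *\<^sub>R C - ratio_b \<tau> *\<^sub>R B" by (simp add: cut_b_def cut_c_def B_def C_def algebra_simps)
  have e4: "cut_b \<tau> - v = ratio_b \<tau> *\<^sub>R B" "cut_c \<tau> - v = ratio_c \<tau> *\<^sub>R C" by (simp_all add: cut_b_def cut_c_def B_def C_def)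
  show "tri_normal (upper1 \<tau>) = (1 - ratio_b \<tau>) *\<^sub>R lat_normal \<tau>"
    unfolding upper1_def tri_normal_def lat_normal_def B_def[symmetric] C_def[symmetric] case_prod_conv e1 e2
    by (simp add: Cross3.right_diff_distrib cross_mult_left cross_mult_right)
  show "tri_normal (upper2 \<tau>) = (ratio_b \<tau> * (1 - ratio_c \<tau>)) *\<^sub>R lat_normal \<tau>"
    unfolding upper2_def tri_normal_def lat_normal_def B_def[symmetric] C_def[symmetric] case_prod_conv e2 e3
    by (simp add: Cross3.right_diff_distrib Cross3.left_diff_distrib cross_mult_left cross_mult_right sk algebra_simps)
  show "tri_normal (tip \<tau>) = (ratio_b \<tau> * ratio_c \<tau>) *\<^sub>R lat_normal \<tau>"
    unfolding tip_def tri_normal_def lat_normal_def B_def[symmetric] C_def[symmetric] case_prod_conv e4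
    by (simp add: cross_mult_left cross_mult_right)
qed

lemma pieces_nondeg:
  assumes \<tau>: "\<tau> \<in> lateral" shows "tri_nondeg (upper1 \<tau>)" "tri_nondeg (upper2 \<tau>)" "tri_nondeg (tip \<tau>)"
  using tri_normal_pieces[of \<tau>] lat_normal_nonzero[OF \<tau>] cut_props[OF \<tau>] tri_nondeg_normal by auto

lemma area_pieces:
  assumes \<tau>: "\<tau> \<in> lateral"
  shows "triangle_area (upper1 \<tau>) + triangle_area (upper2 \<tau>) = triangle_area \<tau> - triangle_area (tip \<tau>)"
proof -
  note S = cut_props[OF \<tau>]
  have a\<tau>: "triangle_area \<tau> = norm (lat_normal \<tau>) / 2"
    using lateral_props(2)[OF \<tau>] by (simp add: lat_normal_def tri_area_def)
  have a1: "triangle_area (upper1 \<tau>) = (1 - ratio_b \<tau>) * norm (lat_normal \<tau>) / 2"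
    using S by (simp only: triangle_area_normal tri_normal_pieces norm_scaleR)
  have a2: "triangle_area (upper2 \<tau>) = (ratio_b \<tau> * (1 - ratio_c \<tau>)) * norm (lat_normal \<tau>) / 2"
    using S by (simp only: triangle_area_normal tri_normal_pieces norm_scaleR) (simp add: abs_mult)
  have a3: "triangle_area (tip \<tau>) = (ratio_b \<tau> * ratio_c \<tau>) * norm (lat_normal \<tau>) / 2"
    using S by (simp only: triangle_area_normal tri_normal_pieces norm_scaleR) (simp add: abs_mult)
  show ?thesis unfolding a1 a2 a3 a\<tau> by (simp add: field_simps)
qed

lemma pieces_in_lateral:
  assumes \<tau>: "\<tau> \<in> lateral"
  shows "tri_verts (upper1 \<tau>) \<subseteq> tri_hull \<tau>" "tri_verts (upper2 \<tau>) \<subseteq> tri_hull \<tau>"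
proof -
  note S = cut_props[OF \<tau>]
  have mem: "cut_b \<tau> \<in> tri_hull \<tau>" "vb \<tau> \<in> tri_hull \<tau>" "vc \<tau> \<in> tri_hull \<tau>" "cut_c \<tau> \<in> tri_hull \<tau>"
    using lateral_coords_in_hull[OF \<tau>, of "ratio_b \<tau>" 0] lateral_coords_in_hull[OF \<tau>, of 1 0] lateral_coords_in_hull[OF \<tau>, of 0 1]
      lateral_coords_in_hull[OF \<tau>, of 0 "ratio_c \<tau>"] S
    by (auto simp: cut_b_def cut_c_def)
  then show "tri_verts (upper1 \<tau>) \<subseteq> tri_hull \<tau>" "tri_verts (upper2 \<tau>) \<subseteq> tri_hull \<tau>" by (auto simp: upper1_def upper2_def tri_verts_def)
qed

lemma rel_interior_piece_subset:
  assumes \<tau>: "\<tau> \<in> lateral" and p: "tri_verts p \<subseteq> tri_hull \<tau>" and nc: "tri_nondeg p"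
  shows "rel_interior (tri_hull p) \<subseteq> rel_interior (tri_hull \<tau>)"
proof (rule subset_rel_interior)
  have c: "convex (tri_hull \<tau>)" by (simp add: tri_hull_eq)
  show "tri_hull p \<subseteq> tri_hull \<tau>" using p c by (simp add: tri_hull_eq hull_minimal)
  have n\<tau>: "tri_nondeg \<tau>" using \<tau> tri_nondeg_T by (auto simp: lateral_def)
  have "tri_verts p \<subseteq> tri_plane \<tau>" using p tri_hull_subset_plane by blast
  then have "tri_plane \<tau> = tri_plane p" using is_plane_unique[OF is_plane_tri_plane[OF n\<tau>] nc] by blast
  then show "affine hull (tri_hull p) = affine hull (tri_hull \<tau>)"
    using tri_plane_eq_affine_hull[OF n\<tau>] tri_plane_eq_affine_hull[OF nc] by (simp add: tri_hull_eq affine_hull_convex_hull)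
qed

lemma rel_interior_upper1: "\<tau> \<in> lateral \<Longrightarrow> rel_interior (tri_hull (upper1 \<tau>)) \<subseteq> rel_interior (tri_hull \<tau>)"
  using rel_interior_piece_subset pieces_in_lateral pieces_nondeg by blast
lemma rel_interior_upper2: "\<tau> \<in> lateral \<Longrightarrow> rel_interior (tri_hull (upper2 \<tau>)) \<subseteq> rel_interior (tri_hull \<tau>)"
  using rel_interior_piece_subset pieces_in_lateral pieces_nondeg by blast

lemma rel_interior_upper_above:
  assumes \<tau>: "\<tau> \<in> lateral" and y: "y \<in> rel_interior (tri_hull (upper1 \<tau>)) \<or> y \<in> rel_interior (tri_hull (upper2 \<tau>))"
  shows "(y - v) \<bullet> u > t"
proof -
  note S = cut_props[OF \<tau>]
  have big: "(vb \<tau> - v) \<bullet> u > t" "(vc \<tau> - v) \<bullet> u > t"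
    using min_height_le[OF \<tau>] t_less(2) min_height_pos by auto
  show ?thesis using y
  proof
    assume y1: "y \<in> rel_interior (tri_hull (upper1 \<tau>))"
    have nc: "\<not> collinear {cut_b \<tau>, vb \<tau>, vc \<tau>}" using pieces_nondeg(1)[OF \<tau>] by (simp add: upper1_def tri_nondeg_def)
    obtain wa wb wc where w: "0 < wa" "0 < wb" "0 < wc" "wa + wb + wc = 1"
      "(y - v) \<bullet> u = wa * ((cut_b \<tau> - v) \<bullet> u) + wb * ((vb \<tau> - v) \<bullet> u) + wc * ((vc \<tau> - v) \<bullet> u)"
      using rel_interior_triangle_weights[OF nc, of y v u] y1 by (auto simp: upper1_def tri_hull_def)
    have "wb * ((vb \<tau> - v) \<bullet> u) > wb * t" "wc * ((vc \<tau> - v) \<bullet> u) \<ge> wc * t"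
      using w big by auto
    moreover have e: "(y - v) \<bullet> u = wa * t + wb * ((vb \<tau> - v) \<bullet> u) + wc * ((vc \<tau> - v) \<bullet> u)"
      using w(5) S(5) by simp
    moreover have "wa * t + wb * t + wc * t = t" using w(4) by (metis distrib_right mult_1)
    ultimately show ?thesis by linarith
  next
    assume y2: "y \<in> rel_interior (tri_hull (upper2 \<tau>))"
    have nc: "\<not> collinear {cut_b \<tau>, vc \<tau>, cut_c \<tau>}" using pieces_nondeg(2)[OF \<tau>] by (simp add: upper2_def tri_nondeg_def)
    obtain wa wb wc where w: "0 < wa" "0 < wb" "0 < wc" "wa + wb + wc = 1"
      "(y - v) \<bullet> u = wa * ((cut_b \<tau> - v) \<bullet> u) + wb * ((vc \<tau> - v) \<bullet> u) + wc * ((cut_c \<tau> - v) \<bullet> u)"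
      using rel_interior_triangle_weights[OF nc, of y v u] y2 by (auto simp: upper2_def tri_hull_def)
    have "wb * ((vc \<tau> - v) \<bullet> u) > wb * t" using w big by auto
    moreover have e: "(y - v) \<bullet> u = wa * t + wb * ((vc \<tau> - v) \<bullet> u) + wc * t"
      using w(5) S(5) S(6) by simp
    moreover have "wa * t + wb * t + wc * t = t" using w(4) by (metis distrib_right mult_1)
    ultimately show ?thesis by linarith
  qed
qed

lemma rel_interior_upper_disjoint:
  assumes \<tau>: "\<tau> \<in> lateral"
  shows "rel_interior (tri_hull (upper1 \<tau>)) \<inter> rel_interior (tri_hull (upper2 \<tau>)) = {}"
proof (rule ccontr)
  assume "rel_interior (tri_hull (upper1 \<tau>)) \<inter> rel_interior (tri_hull (upper2 \<tau>)) \<noteq> {}"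
  then obtain y where y1: "y \<in> rel_interior (tri_hull (upper1 \<tau>))" and y2: "y \<in> rel_interior (tri_hull (upper2 \<tau>))" by blast
  note S = cut_props[OF \<tau>]
  define B where "B = vb \<tau> - v"
  define C where "C = vc \<tau> - v"
  define N where "N = lat_normal \<tau>"
  have NB: "N = B \<times> C" by (simp add: N_def lat_normal_def B_def C_def)
  have NN: "N \<bullet> N > 0" using lat_normal_nonzero[OF \<tau>] by (simp add: N_def)
  \<comment> \<open>(y - v) \<bullet> G = 1 on the line through cut_b and vc; it is above 1 inside upper1, below 1 inside upper2\<close>
  define G where "G = (1 / (N \<bullet> N)) *\<^sub>R ((1 / ratio_b \<tau>) *\<^sub>R (C \<times> N) + N \<times> B)"
  have t1: "B \<bullet> (C \<times> N) = N \<bullet> N"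
    by (metis NB cross_triple inner_commute)
  have t2: "C \<bullet> (N \<times> B) = N \<bullet> N"
    by (metis NB cross_triple inner_commute)
  have t3: "C \<bullet> (C \<times> N) = 0" "B \<bullet> (N \<times> B) = 0" by (simp_all add: dot_cross_self)
  have BG: "B \<bullet> G = 1 / ratio_b \<tau>" using NN t1 t3 by (simp add: G_def inner_add_right)
  have CG: "C \<bullet> G = 1" using NN t2 t3 by (simp add: G_def inner_add_right)
  have vals: "(cut_b \<tau> - v) \<bullet> G = 1" "(vb \<tau> - v) \<bullet> G = 1 / ratio_b \<tau>" "(vc \<tau> - v) \<bullet> G = 1"
    "(cut_c \<tau> - v) \<bullet> G = ratio_c \<tau>"
    using BG CG S by (simp_all add: cut_b_def cut_c_def B_def[symmetric] C_def[symmetric])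
  have big: "1 / ratio_b \<tau> > 1" using S by simp
  have nc1: "\<not> collinear {cut_b \<tau>, vb \<tau>, vc \<tau>}" using pieces_nondeg(1)[OF \<tau>] by (simp add: upper1_def tri_nondeg_def)
  obtain wa wb wc where w: "0 < wa" "0 < wb" "0 < wc" "wa + wb + wc = 1"
    "(y - v) \<bullet> G = wa * ((cut_b \<tau> - v) \<bullet> G) + wb * ((vb \<tau> - v) \<bullet> G) + wc * ((vc \<tau> - v) \<bullet> G)"
    using rel_interior_triangle_weights[OF nc1, of y v G] y1 by (auto simp: upper1_def tri_hull_def)
  have "wb * 1 < wb * (1 / ratio_b \<tau>)" using mult_strict_left_mono[OF big w(2)] .
  then have "wb * (1 / ratio_b \<tau>) > wb" by simp
  then have g1: "(y - v) \<bullet> G > 1" using w vals by simp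
  have nc2: "\<not> collinear {cut_b \<tau>, vc \<tau>, cut_c \<tau>}" using pieces_nondeg(2)[OF \<tau>] by (simp add: upper2_def tri_nondeg_def)
  obtain za zb zc where z: "0 < za" "0 < zb" "0 < zc" "za + zb + zc = 1"
    "(y - v) \<bullet> G = za * ((cut_b \<tau> - v) \<bullet> G) + zb * ((vc \<tau> - v) \<bullet> G) + zc * ((cut_c \<tau> - v) \<bullet> G)"
    using rel_interior_triangle_weights[OF nc2, of y v G] y2 by (auto simp: upper2_def tri_hull_def)
  have lt: "zc * ratio_c \<tau> < zc * 1" using z S by (intro mult_strict_left_mono) auto
  have "(y - v) \<bullet> G = za + zb + zc * ratio_c \<tau>" using z(5) vals by simp
  then have "(y - v) \<bullet> G < 1" using lt z(4) by linarith
  with g1 show False by simp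
qed

definition base_tris where
  "base_tris = (SOME TB. proper_triangles TB \<and> \<Union>(tri_hull ` TB) = base \<and> (\<forall>t\<in>TB. tri_verts t \<subseteq> cut_plane))"

lemma base_tris: "proper_triangles base_tris" "\<Union>(tri_hull ` base_tris) = base"
  "\<And>t. t \<in> base_tris \<Longrightarrow> tri_verts t \<subseteq> cut_plane"
proof -
  have "\<exists>TB. proper_triangles TB \<and> \<Union>(tri_hull ` TB) = base \<and> (\<forall>t\<in>TB. tri_verts t \<subseteq> cut_plane)"
    using base_triangulation by metis
  from someI_ex[OF this] show "proper_triangles base_tris" "\<Union>(tri_hull ` base_tris) = base"
    "\<And>t. t \<in> base_tris \<Longrightarrow> tri_verts t \<subseteq> cut_plane"
    unfolding base_tris_def[symmetric] by auto
qed

definition upper_tris where "upper_tris = upper1 ` lateral \<union> upper2 ` lateral"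

definition trunc_tris where "trunc_tris = (T - lateral) \<union> upper_tris \<union> base_tris"

lemma upper_tris_rel_interior:
  assumes "b \<in> upper_tris"
  obtains \<tau> where "\<tau> \<in> lateral" "relint_tri b \<subseteq> relint_tri \<tau>"
  using assms rel_interior_upper1 rel_interior_upper2 unfolding upper_tris_def by blast

lemma disjoint_upper_upper:
  assumes "\<tau> \<in> lateral" "\<tau>' \<in> lateral" "\<tau> \<noteq> \<tau>'" "b \<in> {upper1 \<tau>, upper2 \<tau>}" "b' \<in> {upper1 \<tau>', upper2 \<tau>'}"
  shows "relint_tri b \<inter> relint_tri b' = {}"
proof -
  have "relint_tri \<tau> \<inter> relint_tri \<tau>' = {}"
    using proper_T assms(1-3) by (auto simp: proper_triangles_def lateral_def)
  then show ?thesis using assms rel_interior_upper1 rel_interior_upper2 by blast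
qed

lemma proper_upper_tris: "proper_triangles upper_tris"
  and sum_upper_tris:
    "sum triangle_area upper_tris = (\<Sum>\<tau>\<in>lateral. triangle_area \<tau> - triangle_area (tip \<tau>))"
proof -
  have "relint_tri (upper1 i) \<inter> relint_tri (upper1 j) = {}"
    and "relint_tri (upper2 i) \<inter> relint_tri (upper2 j) = {}"
    if "i \<in> lateral" "j \<in> lateral" "i \<noteq> j" for i j
    using disjoint_upper_upper[OF that] by blast+
  note 1 = proper_triangles_image[OF finite_lateral pieces_nondeg(1) this(1)]
    and 2 = proper_triangles_image[OF finite_lateral pieces_nondeg(2) this(2)]
  have 12: "relint_tri a \<inter> relint_tri b = {}" if ab: "a \<in> upper1 ` lateral" "b \<in> upper2 ` lateral" for a b
  proof -
    obtain \<tau> \<tau>' where "\<tau> \<in> lateral" "\<tau>' \<in> lateral" "a = upper1 \<tau>" "b = upper2 \<tau>'"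
      using ab by blast
    then show ?thesis
      using rel_interior_upper_disjoint[of \<tau>] disjoint_upper_upper[of \<tau> \<tau>' a b] by (cases "\<tau> = \<tau>'") auto
  qed
  show "proper_triangles upper_tris"
    unfolding upper_tris_def using proper_triangles_Un(1)[OF 1(1) 2(1) 12] .
  have "sum triangle_area upper_tris
      = (\<Sum>\<tau>\<in>lateral. triangle_area (upper1 \<tau>)) + (\<Sum>\<tau>\<in>lateral. triangle_area (upper2 \<tau>))"
    unfolding upper_tris_def using proper_triangles_Un(2)[OF 1(1) 2(1) 12] 1(2) 2(2) finite_lateral
    by (simp add: sum.union_disjoint sum.reindex)
  also have "\<dots> = (\<Sum>\<tau>\<in>lateral. triangle_area \<tau> - triangle_area (tip \<tau>))"
    by (simp add: sum.distrib[symmetric] area_pieces)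
  finally show "sum triangle_area upper_tris = (\<Sum>\<tau>\<in>lateral. triangle_area \<tau> - triangle_area (tip \<tau>))" .
qed

lemma disjoint_nonlateral_upper:
  assumes "a \<in> T - lateral" "b \<in> upper_tris"
  shows "relint_tri a \<inter> relint_tri b = {}"
proof -
  obtain \<tau> where \<tau>: "\<tau> \<in> lateral" "relint_tri b \<subseteq> relint_tri \<tau>"
    using upper_tris_rel_interior[OF assms(2)] .
  have "a \<noteq> \<tau>" "\<tau> \<in> T" using assms(1) \<tau>(1) by (auto simp: lateral_def)
  then have "relint_tri a \<inter> relint_tri \<tau> = {}"
    using proper_T assms(1) by (auto simp: proper_triangles_def)
  then show ?thesis using \<tau>(2) by blast
qed

text \<open>The base lies close to v, hence away from the non-lateral triangles, and in the cutting
  plane, hence below the relative interiors of the upper pieces.\<close>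
lemma disjoint_base_nonlateral:
  assumes a: "a \<in> base_tris" and b: "b \<in> T - lateral"
  shows "relint_tri a \<inter> relint_tri b = {}"
proof -
  have "tri_hull a \<inter> tri_hull b = {}"
  proof (rule ccontr)
    assume "tri_hull a \<inter> tri_hull b \<noteq> {}"
    then obtain x where x: "x \<in> base" "x \<in> tri_hull b" using base_tris(2) a by blast
    have "norm (x - v) < lateral_gap"
      using base_small[OF x(1)] near_radius_pos by (simp add: near_radius_def)
    then show False using nonlateral_far[of b x] b x by auto
  qed
  then show ?thesis using rel_interior_subset by blast
qed

lemma disjoint_base_upper:
  assumes a: "a \<in> base_tris" and b: "b \<in> upper_tris"
  shows "relint_tri a \<inter> relint_tri b = {}"
proof -
  have "relint_tri a \<subseteq> {x. (x - v) \<bullet> u = t}"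
    using base_tris(2) a rel_interior_subset by (force simp: base_def)
  moreover have "relint_tri b \<subseteq> {x. (x - v) \<bullet> u > t}"
    using b rel_interior_upper_above by (auto simp: upper_tris_def)
  ultimately show ?thesis by force
qed

lemma proper_trunc_tris: "proper_triangles trunc_tris"
  and area_trunc_tris: "sum triangle_area trunc_tris
    = sum triangle_area T - (\<Sum>\<tau>\<in>lateral. triangle_area (tip \<tau>)) + sum triangle_area base_tris"
proof -
  have N: "proper_triangles (T - lateral)" using proper_T by (rule proper_triangles_subset) blast
  note NU = proper_triangles_Un[OF N proper_upper_tris disjoint_nonlateral_upper]
  have "relint_tri a \<inter> relint_tri b = {}" if "a \<in> (T - lateral) \<union> upper_tris" "b \<in> base_tris" for a b
    using that disjoint_base_nonlateral disjoint_base_upper by blast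
  note NUB = proper_triangles_Un[OF NU(1) base_tris(1) this]
  show "proper_triangles trunc_tris" unfolding trunc_tris_def by (rule NUB(1))
  have fin: "finite (T - lateral)" "finite upper_tris" "finite base_tris"
    using N proper_upper_tris base_tris(1) by (auto simp: proper_triangles_def)
  have "sum triangle_area trunc_tris
      = sum triangle_area (T - lateral) + sum triangle_area upper_tris + sum triangle_area base_tris"
    unfolding trunc_tris_def using NU(2) NUB(2) fin by (simp add: sum.union_disjoint)
  moreover have "sum triangle_area (T - lateral) = sum triangle_area T - sum triangle_area lateral"
    using finite_T by (simp add: sum_diff lateral_def)
  ultimately show "sum triangle_area trunc_tris
    = sum triangle_area T - (\<Sum>\<tau>\<in>lateral. triangle_area (tip \<tau>)) + sum triangle_area base_tris"
    by (simp add: sum_upper_tris sum_subtractf)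
qed

lemma Union_trunc_tris: "\<Union>(tri_hull ` trunc_tris) = frontier trunc"
proof -
  have "\<Union>(tri_hull ` trunc_tris)
      = \<Union>(tri_hull ` (T - lateral)) \<union> (\<Union>\<tau>\<in>lateral. tri_hull (upper1 \<tau>) \<union> tri_hull (upper2 \<tau>))
        \<union> \<Union>(tri_hull ` base_tris)"
    by (auto simp: trunc_tris_def upper_tris_def)
  also have "(\<Union>\<tau>\<in>lateral. tri_hull (upper1 \<tau>) \<union> tri_hull (upper2 \<tau>))
      = (\<Union>\<tau>\<in>lateral. tri_hull \<tau> \<inter> {y. (y - v) \<bullet> u \<ge> t})"
    using lateral_upper_eq by (simp add: upper1_def upper2_def tri_hull_def)
  finally show ?thesis using frontier_trunc frontier_minus_cap base_tris(2) by simp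
qed

lemma triangulates_trunc: "triangulates trunc_tris (frontier trunc)"
  using proper_trunc_tris Union_trunc_tris by (simp add: triangulates_iff)

definition orth_proj where "orth_proj y = y - (y \<bullet> u) *\<^sub>R u"

lemma linear_orth_proj: "linear orth_proj"
  by (rule linearI) (auto simp: orth_proj_def algebra_simps inner_add_left)

lemma proj_cut_eq: "proj_cut = (\<lambda>y. (t + v \<bullet> u) *\<^sub>R u + orth_proj y)"
  by (auto simp: proj_cut_def orth_proj_def inner_diff_left algebra_simps)

lemma proj_cut_convex_hull: "proj_cut ` (convex hull S) = convex hull (proj_cut ` S)"
proof -
  have "proj_cut ` X = (+) ((t + v \<bullet> u) *\<^sub>R u) ` (orth_proj ` X)" for X
    by (auto simp: proj_cut_eq image_image)
  then show ?thesis
    by (simp add: convex_hull_linear_image[OF linear_orth_proj] convex_hull_translation)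
qed

lemma proj_cut_in_plane: "proj_cut y \<in> cut_plane"
  using u_inner_self by (simp add: proj_cut_def cut_plane_def inner_add_left inner_diff_left)

definition proj_tip where "proj_tip \<tau> = (proj_cut v, proj_cut (cut_b \<tau>), proj_cut (cut_c \<tau>))"

lemma area_proj_tip: "\<tau> \<in> lateral \<Longrightarrow> triangle_area (proj_tip \<tau>) = ratio_b \<tau> * ratio_c \<tau> * \<bar>lat_normal \<tau> \<bullet> u\<bar> / 2"
proof -
  assume \<tau>: "\<tau> \<in> lateral"
  note S = cut_props[OF \<tau>]
  have d: "proj_cut y - proj_cut v = orth_proj (y - v)" for y
    using linear_orth_proj by (simp add: proj_cut_eq linear_diff)
  have "(proj_cut (cut_b \<tau>) - proj_cut v) \<times> (proj_cut (cut_c \<tau>) - proj_cut v) = (((cut_b \<tau> - v) \<times> (cut_c \<tau> - v)) \<bullet> u) *\<^sub>R u"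
    unfolding d orth_proj_def by (rule cross_orth_proj[OF u_inner_self])
  moreover have "(cut_b \<tau> - v) \<times> (cut_c \<tau> - v) = (ratio_b \<tau> * ratio_c \<tau>) *\<^sub>R lat_normal \<tau>"
    using tri_normal_pieces(3)[of \<tau>] by (simp add: tip_def tri_normal_def)
  ultimately have "norm ((proj_cut (cut_b \<tau>) - proj_cut v) \<times> (proj_cut (cut_c \<tau>) - proj_cut v)) = ratio_b \<tau> * ratio_c \<tau> * \<bar>lat_normal \<tau> \<bullet> u\<bar>"
    using u1 S by (simp add: abs_mult)
  then show ?thesis by (simp add: proj_tip_def triangle_area_def tri_area_def)
qed

lemma cut_plane_param:
  obtains p e1 e2 where "orthonormal2 e1 e2" "range (plane_param p e1 e2) = cut_plane"
proof -
  obtain e1 e2 where o: "orthonormal2 e1 e2" and c: "e1 \<times> e2 = u"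
    using orthonormal2_with_cross u_inner_self by blast
  have "u \<bullet> (x - (v + t *\<^sub>R u)) = (x - v) \<bullet> u - t" for x
    using u_inner_self by (simp add: inner_diff_right inner_add_right inner_commute)
  then have "range (plane_param (v + t *\<^sub>R u) e1 e2) = cut_plane"
    using range_plane_param[OF o] c by (auto simp: cut_plane_def)
  then show ?thesis using that o by blast
qed

lemma base_area_bound:
  "sum triangle_area base_tris \<le> (\<Sum>\<tau>\<in>lateral. ratio_b \<tau> * ratio_c \<tau> * \<bar>lat_normal \<tau> \<bullet> u\<bar> / 2)"
proof -
  obtain p e1 e2 where o: "orthonormal2 e1 e2" and rng: "range (plane_param p e1 e2) = cut_plane"
    using cut_plane_param .
  have "sum triangle_area base_tris \<le> sum triangle_area (proj_tip ` lateral)"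
  proof (rule sum_triangle_area_le_cover[OF o base_tris(1)])
    show "finite (proj_tip ` lateral)" using finite_lateral by simp
    show "tri_verts t \<subseteq> range (plane_param p e1 e2)" if "t \<in> base_tris \<union> proj_tip ` lateral" for t
      using that base_tris(3) proj_cut_in_plane rng by (auto simp: proj_tip_def tri_verts_def)
    show "\<Union>(tri_hull ` base_tris) \<subseteq> \<Union>(tri_hull ` proj_tip ` lateral)"
    proof
      fix x assume "x \<in> \<Union>(tri_hull ` base_tris)"
      then obtain \<tau> where \<tau>: "\<tau> \<in> lateral" "x \<in> proj_cut ` (convex hull {v, cut_b \<tau>, cut_c \<tau>})"
        using base_tris(2) base_covered by blast
      then have "x \<in> tri_hull (proj_tip \<tau>)" by (simp add: proj_cut_convex_hull proj_tip_def tri_hull_def)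
      then show "x \<in> \<Union>(tri_hull ` proj_tip ` lateral)" using \<tau>(1) by blast
    qed
  qed
  also have "\<dots> \<le> (\<Sum>\<tau>\<in>lateral. triangle_area (proj_tip \<tau>))"
    using sum_image_le[OF finite_lateral, of triangle_area proj_tip] triangle_area_nonneg by simp
  also have "\<dots> = (\<Sum>\<tau>\<in>lateral. ratio_b \<tau> * ratio_c \<tau> * \<bar>lat_normal \<tau> \<bullet> u\<bar> / 2)"
    by (rule sum.cong) (simp_all add: area_proj_tip)
  finally show ?thesis .
qed

lemma surface_area_trunc: "surface_area trunc \<le> surface_area P - t\<^sup>2 * area_gain"
proof -
  have sQ: "surface_area trunc = sum triangle_area trunc_tris" by (rule surface_area_triangulation[OF triangulates_trunc])
  have sP: "surface_area P = sum triangle_area T" by (rule surface_area_triangulation[OF triT])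
  have tip_area: "triangle_area (tip \<tau>) = ratio_b \<tau> * ratio_c \<tau> * norm (lat_normal \<tau>) / 2" if "\<tau> \<in> lateral" for \<tau>
    using cut_props[OF that] by (simp only: triangle_area_normal tri_normal_pieces norm_scaleR) (simp add: abs_mult)
  have ss: "ratio_b \<tau> * ratio_c \<tau> = t\<^sup>2 / (((vb \<tau> - v) \<bullet> u) * ((vc \<tau> - v) \<bullet> u))" for \<tau>
    by (simp add: ratio_b_def ratio_c_def power2_eq_square)
  have "sum triangle_area trunc_tris \<le> sum triangle_area T - (\<Sum>\<tau>\<in>lateral. triangle_area (tip \<tau>)) + (\<Sum>\<tau>\<in>lateral. ratio_b \<tau> * ratio_c \<tau> * \<bar>lat_normal \<tau> \<bullet> u\<bar> / 2)"
    using area_trunc_tris base_area_bound by simp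
  also have "\<dots> = sum triangle_area T - (\<Sum>\<tau>\<in>lateral. ratio_b \<tau> * ratio_c \<tau> * (norm (lat_normal \<tau>) - \<bar>lat_normal \<tau> \<bullet> u\<bar>) / 2)"
  proof -
    have a: "(\<Sum>\<tau>\<in>lateral. triangle_area (tip \<tau>)) = (\<Sum>\<tau>\<in>lateral. ratio_b \<tau> * ratio_c \<tau> * norm (lat_normal \<tau>) / 2)"
      by (rule sum.cong) (simp_all add: tip_area)
    have b: "(\<Sum>\<tau>\<in>lateral. ratio_b \<tau> * ratio_c \<tau> * (norm (lat_normal \<tau>) - \<bar>lat_normal \<tau> \<bullet> u\<bar>) / 2)
       = (\<Sum>\<tau>\<in>lateral. ratio_b \<tau> * ratio_c \<tau> * norm (lat_normal \<tau>) / 2 - ratio_b \<tau> * ratio_c \<tau> * \<bar>lat_normal \<tau> \<bullet> u\<bar> / 2)"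
      by (rule sum.cong) (simp_all add: right_diff_distrib diff_divide_distrib)
    show ?thesis unfolding a b sum_subtractf by simp
  qed
  also have "(\<Sum>\<tau>\<in>lateral. ratio_b \<tau> * ratio_c \<tau> * (norm (lat_normal \<tau>) - \<bar>lat_normal \<tau> \<bullet> u\<bar>) / 2)
     = t\<^sup>2 * (\<Sum>\<tau>\<in>lateral. (norm (lat_normal \<tau>) - \<bar>lat_normal \<tau> \<bullet> u\<bar>) / (2 * (((vb \<tau> - v) \<bullet> u) * ((vc \<tau> - v) \<bullet> u))))"
    by (simp add: sum_distrib_left ss mult.commute mult.left_commute)
  finally show ?thesis using sQ sP by (simp add: area_gain_def)
qed

lemma volume_trunc: "volume P - vol_loss * t ^ 3 \<le> volume trunc" "volume trunc \<le> volume P"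
proof -
  have bU: "bounded cap" by (rule bounded_subset[of "ball v r"]) (auto simp: cap_def)
  have mU: "cap \<in> lmeasurable" using bU open_cap by (simp add: lmeasurable_open)
  have mP: "P \<in> lmeasurable" using compP by (simp add: lmeasurable_compact)
  have mPU: "P \<inter> cap \<in> sets lebesgue" using mU mP by (simp add: fmeasurableD sets.Int)
  have QPU: "trunc = P - (P \<inter> cap)" by (auto simp: trunc_def)
  have mQ: "measure lebesgue trunc = measure lebesgue P - measure lebesgue (P \<inter> cap)"
    unfolding QPU by (rule measure_Diff) (use mP mPU in \<open>auto simp: fmeasurable_def\<close>)
  have sub: "P \<inter> cap \<subseteq> ball v (cone_const * t)" using cap_norm_bound by (auto simp: dist_norm norm_minus_commute)
  have "measure lebesgue (P \<inter> cap) \<le> measure lebesgue (ball v (cone_const * t))"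
    by (rule measure_mono_fmeasurable[OF sub mPU]) simp
  also have "measure lebesgue (ball v (cone_const * t)) = measure lborel (ball v (cone_const * t))"
    by (intro measure_completion) simp
  also have "\<dots> = (cone_const * t) ^ DIM(pt3) * measure lborel (ball (0::pt3) 1)"
    using content_ball_conv_unit_ball[of "cone_const * t" v] cone_const_ge1 t_pos by simp
  also have "measure lborel (ball (0::pt3) 1) = measure lebesgue (ball (0::pt3) 1)"
    by (intro measure_completion[symmetric]) simp
  finally have "measure lebesgue (P \<inter> cap) \<le> (cone_const * t) ^ 3 * measure lebesgue (ball (0::pt3) 1)" by simp
  then show "volume P - vol_loss * t ^ 3 \<le> volume trunc"
    using mQ by (simp add: volume_def vol_loss_def power_mult_distrib mult_ac)
  show "volume trunc \<le> volume P" using mQ by (simp add: volume_def)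
qed

end

lemma rescaled_area_less:
  fixes VP VQ AP AQ c g t :: real
  assumes VQ: "0 < VQ" "VQ \<le> VP" "VP - c * t ^ 3 \<le> VQ"
    and AQ: "0 \<le> AQ" "AQ \<le> AP - t\<^sup>2 * g" and AP: "0 \<le> AP" and t: "0 < t"
    and small: "AP * c * t < VP * g"
  shows "((VP / VQ) powr (1/3))\<^sup>2 * AQ < AP"
proof -
  define x where "x = VP / VQ"
  have x1: "x \<ge> 1" using VQ by (simp add: x_def)
  have "(x powr (1/3))\<^sup>2 = x powr (2/3)"
    using x1 by (simp add: power2_eq_square powr_add[symmetric])
  also have "\<dots> \<le> x" using x1 powr_mono[of "2/3" 1 x] by simp
  finally have "(x powr (1/3))\<^sup>2 * AQ \<le> x * AQ" using AQ(1) by (rule mult_right_mono)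
  also have "\<dots> \<le> x * (AP - t\<^sup>2 * g)" using AQ(2) x1 by simp
  also have "\<dots> < AP"
  proof -
    have "AP * c * t ^ 3 < VP * g * t\<^sup>2"
      using mult_strict_right_mono[OF small, of "t\<^sup>2"] t by (simp add: power2_eq_square power3_eq_cube ac_simps)
    moreover have "AP * (VP - c * t ^ 3) \<le> AP * VQ" using VQ(3) AP by (rule mult_left_mono)
    ultimately have "VP * (AP - t\<^sup>2 * g) < AP * VQ" by (simp add: algebra_simps)
    then show ?thesis using VQ(1) by (simp add: x_def divide_less_eq mult.commute)
  qed
  finally show ?thesis by (simp add: x_def)
qed

context convex_vertex
begin

definition t_threshold where
  "t_threshold = Min {t_bound, volume P * area_gain / (surface_area P * vol_loss + 1),
                      volume P / (vol_loss + 1), 1}"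

lemma volume_P_pos: "volume P > 0"
  using volume_pos[OF compP] int_pt(1) by blast

lemma t_threshold_pos: "t_threshold > 0"
  using t_bound_pos volume_P_pos area_gain_pos vol_loss_nonneg surface_area_nonneg[OF triT]
  by (simp add: t_threshold_def add_nonneg_pos)

lemma rescaled_truncation_smaller:
  assumes t: "0 < t" "t < t_threshold"
  shows "surface_area (rescale_to_volume (volume P) (truncate P v u r t)) < surface_area P"
proof -
  have t': "t < t_bound" "t < 1" "t < volume P / (vol_loss + 1)"
    "t < volume P * area_gain / (surface_area P * vol_loss + 1)"
    using t by (auto simp: t_threshold_def)
  interpret truncation P v u r T t by unfold_locales (use t t' in auto)
  have AP: "surface_area P \<ge> 0" by (rule surface_area_nonneg[OF triT])
  have "vol_loss * t ^ 3 \<le> vol_loss * t"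
    using t t'(2) vol_loss_nonneg by (intro mult_left_mono) (auto simp: power_le_one_iff power3_eq_cube mult_le_one)
  moreover have "vol_loss * t < volume P"
  proof -
    have "t * (vol_loss + 1) < volume P" using t'(3) vol_loss_nonneg by (simp add: pos_less_divide_eq)
    then show ?thesis using t(1) by (simp add: algebra_simps)
  qed
  ultimately have VQ: "0 < volume trunc" using volume_trunc(1) by linarith
  have "surface_area P * vol_loss * t < volume P * area_gain"
  proof -
    have "t * (surface_area P * vol_loss + 1) < volume P * area_gain"
      using t'(4) AP vol_loss_nonneg by (simp add: pos_less_divide_eq add_nonneg_pos)
    then show ?thesis using t(1) by (simp add: algebra_simps)
  qed
  then have "((volume P / volume trunc) powr (1/3))\<^sup>2 * surface_area trunc < surface_area P"
    by (rule rescaled_area_less[OF VQ volume_trunc(2,1) surface_area_nonneg[OF triangulates_trunc]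
        surface_area_trunc AP t(1)])
  moreover have "rescale_to_volume (volume P) (truncate P v u r t)
      = (\<lambda>x. (volume P / volume trunc) powr (1/3) *\<^sub>R x) ` trunc"
    by (simp add: rescale_to_volume_def truncate_eq_trunc)
  ultimately show ?thesis
    using surface_area_scale[OF _ triangulates_trunc] VQ volume_P_pos by auto
qed

end

theorem proposition2p4:
  fixes P :: "(real^3) set" and v u :: "real^3" and r :: real
  assumes "polyhedron P"
    and "strictly_convex_vertex P v"
    and "norm u = 1" and "r > 0"
    and "convex (P \<inter> cball v r)"
    and "\<forall>x\<in>P \<inter> cball v r. x \<noteq> v \<longrightarrow> inner (x - v) u > 0"
  shows "\<exists>t0>0. \<forall>t. 0 < t \<and> t < t0 \<longrightarrow>
           surface_area (rescale_to_volume (volume P) (truncate P v u r t)) < surface_area P"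
proof -
  obtain T where T: "triangulates T (frontier P)" using assms(1) by (auto simp: polyhedron_def)
  interpret convex_vertex P v u r T
    using assms T by unfold_locales (auto simp: polyhedron_def strictly_convex_vertex_def)
  show ?thesis using t_threshold_pos rescaled_truncation_smaller by blast
qed

end
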